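(* For each integer $n\ge 0$ let $S_n(q)=\sum_{j=-n}^n (-1)^j q^{-j^2}$. Then for complex $a,c$ with $\max \{|a|, |c/q|, |ac/q|\}<1$, \begin{align*} \sum_{n=0}^\infty \frac{(q/c; q)_n}{(-a; q)_n} \biggl(-\frac{c}{q}\biggr)^n =\frac{(-q, a, c, -ac/q; q)_\infty}{(q, -a, -c/q, ac/q; q)_\infty}\Biggl(2+\sum_{n=1}^\infty (1+q^n)q^{n^2-2n}\frac{(q/a, q/c; q)_n (ac)^n}{(a, c; q)_n}\bigl(q^n S_n(q)-S_{n-1}(q)\bigr) \Biggr). \end{align*}
   Context: Throughout, $q$ is a complex number with $0<|q|<1$. For $x\in\mathbb{C}$, $(x;q)_\infty=\prod_{k=0}^\infty(1-xq^k)$ and, for an integer $n\ge 0$, $(x;q)_n=\prod_{k=0}^{n-1}(1-xq^k)$; also $(x_1,\dots,x_m;q)_n=(x_1;q)_n\cdots(x_m;q)_n$ for $n$ an integer or $\infty$. *)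

theory Defs
  imports "HOL-Analysis.Analysis"
begin

definition qpoch :: "complex \<Rightarrow> complex \<Rightarrow> nat \<Rightarrow> complex" where
  "qpoch x q n = (\<Prod>k<n. 1 - x * q ^ k)"

definition qpoch_inf :: "complex \<Rightarrow> complex \<Rightarrow> complex" where
  "qpoch_inf x q = (\<Prod>k. 1 - x * q ^ k)"

definition S_sum :: "complex \<Rightarrow> int \<Rightarrow> complex" where
  "S_sum q n = (\<Sum>j\<in>{-n..n}. (-1) powi j * q powi (-(j^2)))"

end

theory Submission
  imports Defs "HOL-Complex_Analysis.Complex_Analysis"
begin

text \<open>
  Heine's transformation with A = q/c, B = q, C = -a, z = -c/q turns the left-hand side into
  (q, -1; q)_inf / (-a, -c/q; q)_inf times the 2phi1 series with parameters -a/q, -c/q; -1 at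
  argument q, and Euler's transformation at C = -1 (reached from the range |C| < |B| by analytic
  continuation in C) identifies that series with the one with parameters q/c, q/a; -1 at argument
  -ac/q. The latter is half the beta-side of Bailey's lemma with rho_1 = q/a, rho_2 = q/c for the
  Bailey pair relative to 1 given by beta_n = 2 (-1)^n / (q, -1; q)_n and
  alpha_r = q^(r^2 - r) (1 + q^r) (q^r S_r - S_(r-1)). That these form a Bailey pair is a finite
  telescoping identity combined with Gauss' evaluation of the alternating sum of q-binomial
  coefficients; Bailey's lemma itself follows by interchanging a double series whose inner sums are
  q-Gauss sums. The argument needs |q| < |a|; since both sides, multiplied by suitable infinite
  products, are holomorphic in a on the punctured unit disc, the identity extends by analytic
  continuation.
\<close>

section \<open>Analytic preliminaries\<close>

lemma norm_mult_less_one: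
  fixes x y :: "'a :: real_normed_div_algebra"
  assumes "norm x < 1" "norm y \<le> 1"
  shows "norm (x * y) < 1"
proof -
  have "norm x * norm y \<le> norm x"
    using assms by (simp add: mult_left_le)
  then show ?thesis
    using assms by (simp add: norm_mult)
qed

lemma eq_divide_mult_iff:
  fixes d :: "'a :: field"
  assumes "d \<noteq> 0"
  shows "l = n / d * x \<longleftrightarrow> d * l = n * x"
  using assms by (auto simp: field_simps)

lemma LIMSEQ_nonzero_imp_bounded_below:
  fixes X :: "nat \<Rightarrow> 'a :: real_normed_vector"
  assumes "X \<longlonglongrightarrow> L" "L \<noteq> 0" "\<And>n. X n \<noteq> 0"
  shows "\<exists>d>0. \<forall>n. d \<le> norm (X n)"
proof -
  have "norm L / 2 < norm L"
    using assms(2) by simp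
  with tendsto_norm[OF assms(1)] have "eventually (\<lambda>n. norm L / 2 < norm (X n)) sequentially"
    by (rule order_tendstoD)
  then obtain N where N: "\<And>n. n \<ge> N \<Longrightarrow> norm L / 2 < norm (X n)"
    by (auto simp: eventually_sequentially)
  define d where "d = min (norm L / 2) (Min (insert 1 ((\<lambda>n. norm (X n)) ` {..<N})))"
  have "d \<le> norm (X n)" for n
  proof (cases "n \<ge> N")
    case True
    then show ?thesis using N[of n] by (auto simp: d_def)
  next
    case False
    then have "Min (insert 1 ((\<lambda>n. norm (X n)) ` {..<N})) \<le> norm (X n)"
      by (intro Min_le) auto
    then show ?thesis by (auto simp: d_def)
  qed
  moreover have "d > 0"
    using assms(2,3) by (auto simp: d_def)
  ultimately show ?thesis by blast
qed

lemma summable_bounded_mult_geometric: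
  fixes f :: "nat \<Rightarrow> complex"
  assumes "\<And>n. norm (f n) \<le> K" "norm w < 1"
  shows "summable (\<lambda>n. f n * w ^ n)"
proof (rule summable_comparison_test)
  show "\<exists>N. \<forall>n\<ge>N. norm (f n * w ^ n) \<le> K * norm w ^ n"
    using assms by (auto simp: norm_mult norm_power intro!: mult_right_mono)
  show "summable (\<lambda>n. K * norm w ^ n)"
    using assms by (intro summable_mult summable_geometric) auto
qed

lemma linear_le_geometric:
  fixes t :: real
  assumes t: "t > 1"
  shows "real r + 1 \<le> (1 + 1 / (t - 1)) * t ^ r"
proof -
  have "1 + real r * (t - 1) \<le> (1 + (t - 1)) ^ r"
    using t by (intro Bernoulli_inequality) auto
  then have b: "1 + real r * (t - 1) \<le> t ^ r" by simp
  have t1: "1 \<le> t ^ r" using t by simp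
  have "real r \<le> (t ^ r - 1) / (t - 1)" using b t by (simp add: field_simps)
  also have "\<dots> \<le> t ^ r / (t - 1)" using t by (intro divide_right_mono) auto
  finally have "real r + 1 \<le> t ^ r / (t - 1) + t ^ r" using t1 by linarith
  then show ?thesis by (simp add: algebra_simps)
qed

lemma geometric_sum_le:
  fixes t :: real
  assumes t: "t > 1"
  shows "(\<Sum>r\<le>n. t ^ r) \<le> t ^ Suc n / (t - 1)"
proof -
  have "(1 - t) * (\<Sum>r\<le>n. t ^ r) = 1 - t ^ Suc n" by (rule sum_gp_basic)
  then have "(\<Sum>r\<le>n. t ^ r) = (t ^ Suc n - 1) / (t - 1)" using t by (simp add: field_simps)
  also have "\<dots> \<le> t ^ Suc n / (t - 1)" using t by (intro divide_right_mono) auto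
  finally show ?thesis .
qed

lemma summable_linear_mult_geometric:
  fixes x :: real
  assumes "0 \<le> x" "x < 1"
  shows "summable (\<lambda>n. (real n + 1) * x ^ n)"
proof -
  define t where "t = 2 / (1 + x)"
  have t: "t > 1" "t * x < 1"
    using assms by (auto simp: t_def field_simps)
  show ?thesis
  proof (rule summable_comparison_test)
    show "summable (\<lambda>n. (1 + 1 / (t - 1)) * (t * x) ^ n)"
      using t assms by (intro summable_mult summable_geometric) auto
    have "(real n + 1) * x ^ n \<le> (1 + 1 / (t - 1)) * t ^ n * x ^ n" for n
      by (rule mult_right_mono[OF linear_le_geometric[OF t(1)]]) (use assms in simp)
    then show "\<exists>N. \<forall>n\<ge>N. norm ((real n + 1) * x ^ n) \<le> (1 + 1 / (t - 1)) * (t * x) ^ n"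
      using assms by (simp add: power_mult_distrib mult.assoc)
  qed
qed

lemma infsum_eq_suminf:
  fixes f :: "nat \<Rightarrow> 'a::banach"
  assumes "summable (\<lambda>n. norm (f n))"
  shows "infsum f UNIV = suminf f"
  using norm_summable_imp_has_sum[OF assms summable_sums[OF summable_norm_cancel[OF assms]]]
  by (rule infsumI)

lemma summable_on_pairs_iff:
  fixes g :: "nat \<Rightarrow> nat \<Rightarrow> 'a::banach"
  shows "(\<lambda>p. norm (g (fst p) (snd p))) summable_on UNIV \<longleftrightarrow>
    (\<forall>n. summable (\<lambda>m. norm (g n m))) \<and> summable (\<lambda>n. \<Sum>m. norm (g n m))"
proof -
  have inner: "(\<lambda>m. norm (g n m)) summable_on UNIV \<longleftrightarrow> summable (\<lambda>m. norm (g n m))" for n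
    by (rule summable_on_UNIV_nonneg_real_iff) simp
  have "(\<lambda>n. norm (infsum (\<lambda>m. norm (g n m)) UNIV)) summable_on UNIV \<longleftrightarrow> summable (\<lambda>n. \<Sum>m. norm (g n m))"
    if "\<forall>n. summable (\<lambda>m. norm (g n m))"
    using that by (simp add: infsum_eq_suminf summable_on_UNIV_nonneg_real_iff suminf_nonneg)
  then show ?thesis
    using Infinite_Sum.abs_summable_on_Sigma_iff[where f = "\<lambda>p. g (fst p) (snd p)" and A = UNIV and B = "\<lambda>_. UNIV"]
      inner
    by auto
qed

lemma suminf_swap:
  fixes g :: "nat \<Rightarrow> nat \<Rightarrow> complex"
  assumes s1: "\<And>n. summable (\<lambda>m. norm (g n m))"
    and s2: "summable (\<lambda>n. \<Sum>m. norm (g n m))"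
  shows "(\<Sum>n. \<Sum>m. g n m) = (\<Sum>m. \<Sum>n. g n m)"
    and "summable (\<lambda>n. \<Sum>m. g n m)" and "summable (\<lambda>m. \<Sum>n. g n m)"
proof -
  have abs: "(\<lambda>p. norm (g (fst p) (snd p))) summable_on UNIV"
    using summable_on_pairs_iff s1 s2 by blast
  then have "(\<lambda>p. norm (g (snd p) (fst p))) summable_on UNIV"
    using summable_on_reindex[of prod.swap UNIV "\<lambda>p. norm (g (fst p) (snd p))"] by (simp add: o_def)
  then have s1': "\<And>m. summable (\<lambda>n. norm (g n m))" and s2': "summable (\<lambda>m. \<Sum>n. norm (g n m))"
    using summable_on_pairs_iff[of "\<lambda>m n. g n m"] by auto
  have rows: "summable (\<lambda>n. norm (\<Sum>m. g n m))"
    by (rule summable_comparison_test[OF _ s2]) (auto intro!: summable_norm s1 exI[of _ 0])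
  have cols: "summable (\<lambda>m. norm (\<Sum>n. g n m))"
    by (rule summable_comparison_test[OF _ s2']) (auto intro!: summable_norm s1' exI[of _ 0])
  show "summable (\<lambda>n. \<Sum>m. g n m)" "summable (\<lambda>m. \<Sum>n. g n m)"
    using rows cols by (auto intro: summable_norm_cancel)
  have "(\<lambda>p. g (fst p) (snd p)) summable_on UNIV"
    using abs by (rule Infinite_Sum.abs_summable_summable)
  then have "infsum (\<lambda>n. infsum (\<lambda>m. g n m) UNIV) UNIV = infsum (\<lambda>m. infsum (\<lambda>n. g n m) UNIV) UNIV"
    by (intro infsum_swap_banach) (simp add: case_prod_unfold)
  then show "(\<Sum>n. \<Sum>m. g n m) = (\<Sum>m. \<Sum>n. g n m)"
    by (simp add: infsum_eq_suminf s1 s1' rows cols)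
qed

lemma suminf_swap_geometric:
  fixes g :: "nat \<Rightarrow> nat \<Rightarrow> complex"
  assumes bound: "\<And>n m. norm (g n m) \<le> K * x ^ n * y ^ m"
    and x: "0 \<le> x" "x < 1" and y: "0 \<le> y" "y < 1"
  shows "(\<Sum>n. \<Sum>m. g n m) = (\<Sum>m. \<Sum>n. g n m)"
    and "summable (\<lambda>n. \<Sum>m. g n m)" and "summable (\<lambda>m. \<Sum>n. g n m)"
proof -
  have sy: "summable (\<lambda>m. y ^ m)"
    using y by (intro summable_geometric) auto
  have s1: "summable (\<lambda>m. norm (g n m))" for n
    by (rule summable_comparison_test[OF _ summable_mult[OF sy, of "K * x ^ n"]])
       (use bound in \<open>auto simp: mult.assoc\<close>)
  have "summable (\<lambda>n. \<Sum>m. norm (g n m))"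
  proof (rule summable_comparison_test)
    show "summable (\<lambda>n. K * (\<Sum>m. y ^ m) * x ^ n)"
      using x by (intro summable_mult summable_geometric) auto
    have "norm (\<Sum>m. norm (g n m)) \<le> K * (\<Sum>m. y ^ m) * x ^ n" for n
    proof -
      have "norm (\<Sum>m. norm (g n m)) = (\<Sum>m. norm (g n m))"
        using s1[of n] by (simp add: suminf_nonneg)
      also have "\<dots> \<le> (\<Sum>m. K * x ^ n * y ^ m)"
        by (intro suminf_le s1 summable_mult sy) (use bound in auto)
      also have "\<dots> = K * (\<Sum>m. y ^ m) * x ^ n"
        using sy by (simp add: suminf_mult mult_ac)
      finally show ?thesis .
    qed
    then show "\<exists>N. \<forall>n\<ge>N. norm (\<Sum>m. norm (g n m)) \<le> K * (\<Sum>m. y ^ m) * x ^ n"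
      by blast
  qed
  then show "(\<Sum>n. \<Sum>m. g n m) = (\<Sum>m. \<Sum>n. g n m)"
    and "summable (\<lambda>n. \<Sum>m. g n m)" and "summable (\<lambda>m. \<Sum>n. g n m)"
    using suminf_swap[OF s1] by auto
qed

lemma suminf_swap_triangular:
  fixes g :: "nat \<Rightarrow> nat \<Rightarrow> complex"
  assumes bound: "\<And>n r. norm (g n r) \<le> L * x ^ n * (real r + 1)"
    and upper: "\<And>n r. n < r \<Longrightarrow> g n r = 0" and x: "0 \<le> x" "x < 1"
  shows "(\<Sum>n. \<Sum>r. g n r) = (\<Sum>r. \<Sum>n. g n r)" and "summable (\<lambda>r. \<Sum>n. g n r)"
proof -
  define t where "t = 2 / (1 + x)"
  have t: "t > 1" "t * x < 1"
    using x by (auto simp: t_def field_simps)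
  define C where "C = 1 + 1 / (t - 1)"
  have L: "L \<ge> 0"
    using order.trans[OF norm_ge_zero bound[of 0 0]] by simp
  have s1: "summable (\<lambda>r. norm (g n r))" for n
    by (rule summable_finite[of "{..n}"]) (auto simp: upper)
  have "summable (\<lambda>n. \<Sum>r. norm (g n r))"
  proof (rule summable_comparison_test)
    show "summable (\<lambda>n. L * C * t / (t - 1) * (t * x) ^ n)"
      using t x by (intro summable_mult summable_geometric) auto
    have "(\<Sum>r. norm (g n r)) \<le> L * C * t / (t - 1) * (t * x) ^ n" for n
    proof -
      have "(\<Sum>r. norm (g n r)) = (\<Sum>r\<le>n. norm (g n r))"
        by (rule suminf_finite) (auto simp: upper)
      also have "\<dots> \<le> (\<Sum>r\<le>n. L * x ^ n * (C * t ^ r))"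
        using bound linear_le_geometric[OF t(1)] L x unfolding C_def
        by (intro sum_mono order.trans[OF bound] mult_left_mono) auto
      also have "\<dots> = L * C * x ^ n * (\<Sum>r\<le>n. t ^ r)"
        by (simp add: sum_distrib_left mult_ac)
      also have "\<dots> \<le> L * C * x ^ n * (t ^ Suc n / (t - 1))"
        using L t x by (intro mult_left_mono geometric_sum_le) (auto simp: C_def)
      also have "\<dots> = L * C * t / (t - 1) * (t * x) ^ n"
        by (simp add: power_mult_distrib field_simps)
      finally show ?thesis .
    qed
    moreover have "0 \<le> (\<Sum>r. norm (g n r))" for n
      using s1[of n] by (simp add: suminf_nonneg)
    ultimately show "\<exists>N. \<forall>n\<ge>N. norm (\<Sum>r. norm (g n r)) \<le> L * C * t / (t - 1) * (t * x) ^ n"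
      by auto
  qed
  then show "(\<Sum>n. \<Sum>r. g n r) = (\<Sum>r. \<Sum>n. g n r)" and "summable (\<lambda>r. \<Sum>n. g n r)"
    using suminf_swap[OF s1] by auto
qed

lemma holomorphic_on_suminf:
  fixes f :: "nat \<Rightarrow> complex \<Rightarrow> complex"
  assumes "open S" and "\<And>n. f n holomorphic_on S"
    and "\<And>x. x \<in> S \<Longrightarrow> \<exists>d>0. cball x d \<subseteq> S \<and>
           (\<exists>M. summable M \<and> (\<forall>n. \<forall>y\<in>cball x d. norm (f n y) \<le> M n))"
  shows "(\<lambda>x. \<Sum>n. f n x) holomorphic_on S"
proof (rule holomorphic_uniform_sequence[where f = "\<lambda>N x. \<Sum>n<N. f n x"])
  fix x assume "x \<in> S"
  then obtain d M where "d > 0" "cball x d \<subseteq> S" "summable M"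
    and "\<And>n y. y \<in> cball x d \<Longrightarrow> norm (f n y) \<le> M n"
    using assms(3) by meson
  then show "\<exists>d>0. cball x d \<subseteq> S \<and>
      uniform_limit (cball x d) (\<lambda>N x. \<Sum>n<N. f n x) (\<lambda>x. \<Sum>n. f n x) sequentially"
    using Weierstrass_m_test[of "cball x d" f M] by blast
qed (use assms in \<open>auto intro: holomorphic_on_sum\<close>)

lemma analytic_continuation_from_annulus:
  fixes f g :: "complex \<Rightarrow> complex"
  assumes "f holomorphic_on S" "g holomorphic_on S" "open S" "connected S"
    and "{z. r < norm z \<and> norm z < s} \<subseteq> S" "0 \<le> r" "r < s"
    and "\<And>z. r < norm z \<Longrightarrow> norm z < s \<Longrightarrow> f z = g z" and "x \<in> S"
  shows "f x = g x"
proof (rule analytic_continuation_open[OF _ assms(3) _ assms(4,5,1,2) _ assms(9)])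
  show "open {z :: complex. r < norm z \<and> norm z < s}"
    by (intro open_Collect_conj open_Collect_less continuous_intros)
  have "norm (complex_of_real ((r + s) / 2)) = (r + s) / 2"
    unfolding norm_of_real using assms(6,7) by simp
  then have "complex_of_real ((r + s) / 2) \<in> {z. r < norm z \<and> norm z < s}"
    using assms(7) by simp
  then show "{z :: complex. r < norm z \<and> norm z < s} \<noteq> {}"
    by blast
qed (use assms(8) in simp)

section \<open>q-Pochhammer symbols\<close>

lemma qpoch_0 [simp]: "qpoch x q 0 = 1"
  by (simp add: qpoch_def)

lemma qpoch_Suc: "qpoch x q (Suc n) = qpoch x q n * (1 - x * q ^ n)"
  by (simp add: qpoch_def)

lemma qpoch_add: "qpoch x q (n + m) = qpoch x q n * qpoch (x * q ^ n) q m"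
  by (induction m) (simp_all add: qpoch_Suc power_add mult_ac)

lemma qpoch_nonzero:
  assumes "\<And>k. k < n \<Longrightarrow> x * q ^ k \<noteq> 1"
  shows "qpoch x q n \<noteq> 0"
  using assms by (auto simp: qpoch_def)

lemma qpoch_q_Suc: "qpoch q q (Suc n) = qpoch q q n * (1 - q ^ Suc n)"
  by (simp add: qpoch_Suc)

lemma qpoch_q_pred: "0 < k \<Longrightarrow> qpoch q q k = qpoch q q (k - 1) * (1 - q ^ k)"
  by (cases k) (simp_all add: qpoch_q_Suc)

lemma holomorphic_on_qpoch [holomorphic_intros]:
  "g holomorphic_on S \<Longrightarrow> (\<lambda>x. qpoch (g x) q n) holomorphic_on S"
  unfolding qpoch_def by (intro holomorphic_intros)

locale qseries =
  fixes q :: complex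
  assumes norm_q: "norm q < 1"
begin

lemma norm_q_power_le_1: "norm (q ^ n) \<le> 1"
  using norm_q by (simp add: norm_power power_le_one)

lemma mult_q_power_neq_1:
  assumes "norm x < 1"
  shows "x * q ^ k \<noteq> 1"
  using norm_mult_less_one[OF assms norm_q_power_le_1[of k]] by auto

lemma q_mult_q_power_neq_1: "q * q ^ k \<noteq> 1"
  by (rule mult_q_power_neq_1[OF norm_q])

lemma one_minus_q_power_nonzero: "0 < k \<Longrightarrow> 1 - q ^ k \<noteq> 0"
  using q_mult_q_power_neq_1[of "k - 1"] by (cases k) auto

lemma minus_one_mult_q_power_neq_1: "- 1 * q ^ k \<noteq> 1"
proof (cases "k = 0")
  case False
  then have "norm (q ^ k) < 1"
    using norm_q by (simp add: norm_power power_less_one_iff)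
  then show ?thesis
    by (metis mult_minus1 norm_minus_cancel norm_one order.irrefl)
qed simp

lemma qpoch_q_nonzero: "qpoch q q n \<noteq> 0"
  using q_mult_q_power_neq_1 by (intro qpoch_nonzero)

lemma convergent_prod_qpoch: "convergent_prod (\<lambda>k. 1 - x * q ^ k)"
proof -
  have "summable (\<lambda>k. norm x * norm q ^ k)"
    using norm_q by (intro summable_mult summable_geometric) auto
  then have "summable (\<lambda>k. norm ((1 - x * q ^ k) - 1))"
    by (simp add: norm_mult norm_power)
  then show ?thesis
    by (intro abs_convergent_prod_imp_convergent_prod summable_imp_abs_convergent_prod)
qed

lemma qpoch_tendsto: "(\<lambda>n. qpoch x q n) \<longlonglongrightarrow> qpoch_inf x q"
proof -
  have "(\<lambda>n. qpoch x q (Suc n)) \<longlonglongrightarrow> qpoch_inf x q"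
    using convergent_prod_LIMSEQ[OF convergent_prod_qpoch]
    by (simp add: qpoch_def qpoch_inf_def lessThan_Suc_atMost)
  then show ?thesis by (rule LIMSEQ_imp_Suc)
qed

lemma qpoch_inf_split: "qpoch_inf x q = qpoch x q n * qpoch_inf (x * q ^ n) q"
proof -
  have "(\<lambda>m. qpoch x q (m + n)) \<longlonglongrightarrow> qpoch_inf x q"
    using qpoch_tendsto by (rule LIMSEQ_ignore_initial_segment)
  moreover have "(\<lambda>m. qpoch x q (m + n)) \<longlonglongrightarrow> qpoch x q n * qpoch_inf (x * q ^ n) q"
    unfolding add.commute[of _ n] qpoch_add by (intro tendsto_mult tendsto_const qpoch_tendsto)
  ultimately show ?thesis by (rule LIMSEQ_unique)
qed

lemma qpoch_inf_nonzero: "(\<And>k. x * q ^ k \<noteq> 1) \<Longrightarrow> qpoch_inf x q \<noteq> 0"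
  unfolding qpoch_inf_def by (intro prodinf_nonzero convergent_prod_qpoch) auto

lemma qpoch_inf_nonzero_norm_less_1: "norm x < 1 \<Longrightarrow> qpoch_inf x q \<noteq> 0"
  by (rule qpoch_inf_nonzero[OF mult_q_power_neq_1])

lemma qpoch_inf_nonzero_shift:
  "(\<And>k. x * q ^ k \<noteq> 1) \<Longrightarrow> qpoch_inf (x * q ^ n) q \<noteq> 0"
  by (metis mult.assoc power_add qpoch_inf_nonzero)

lemma qpoch_inf_shift:
  assumes "\<And>k. k < n \<Longrightarrow> x * q ^ k \<noteq> 1"
  shows "qpoch_inf (x * q ^ n) q = qpoch_inf x q / qpoch x q n"
  using qpoch_inf_split[of x n] qpoch_nonzero[OF assms] by simp

lemma norm_qpoch_le:
  assumes "norm x \<le> R"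
  shows "norm (qpoch x q n) \<le> exp (R / (1 - norm q))"
proof -
  have "norm (qpoch x q n) = (\<Prod>k<n. norm (1 - x * q ^ k))"
    by (simp add: qpoch_def prod_norm)
  also have "\<dots> \<le> (\<Prod>k<n. exp (R * norm q ^ k))"
  proof (intro prod_mono conjI)
    fix k
    have "norm (1 - x * q ^ k) \<le> 1 + norm x * norm q ^ k"
      by (metis norm_mult norm_power norm_one norm_triangle_ineq4)
    also have "\<dots> \<le> 1 + R * norm q ^ k"
      using assms by (simp add: mult_right_mono)
    also have "\<dots> \<le> exp (R * norm q ^ k)"
      by (rule exp_ge_add_one_self)
    finally show "norm (1 - x * q ^ k) \<le> exp (R * norm q ^ k)" .
  qed auto
  also have "\<dots> = exp (\<Sum>k<n. R * norm q ^ k)"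
    by (simp add: exp_sum)
  also have "(\<Sum>k<n. R * norm q ^ k) \<le> (\<Sum>k. R * norm q ^ k)"
    using norm_q order.trans[OF norm_ge_zero assms]
    by (intro sum_le_suminf summable_mult summable_geometric) auto
  also have "\<dots> = R / (1 - norm q)"
    using norm_q by (simp add: suminf_mult suminf_geometric divide_simps)
  finally show ?thesis by simp
qed

lemma norm_qpoch_inf_le:
  assumes "norm x \<le> R"
  shows "norm (qpoch_inf x q) \<le> exp (R / (1 - norm q))"
  by (rule LIMSEQ_le_const2[OF tendsto_norm[OF qpoch_tendsto]])
     (use norm_qpoch_le[OF assms] in auto)

lemma qpoch_bounded_below:
  assumes "\<And>k. x * q ^ k \<noteq> 1"
  shows "\<exists>d>0. \<forall>n. d \<le> norm (qpoch x q n)"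
  using assms qpoch_nonzero
  by (intro LIMSEQ_nonzero_imp_bounded_below[OF qpoch_tendsto qpoch_inf_nonzero]) auto

lemma qpoch_ratio_bounded:
  assumes "\<And>k. y * q ^ k \<noteq> 1"
  shows "\<exists>K. \<forall>n. norm (qpoch x q n / qpoch y q n) \<le> K"
proof -
  obtain d where d: "d > 0" "\<And>n. d \<le> norm (qpoch y q n)"
    using qpoch_bounded_below[OF assms] by blast
  have "norm (qpoch x q n / qpoch y q n) \<le> exp (norm x / (1 - norm q)) / d" for n
    unfolding norm_divide using d by (intro frac_le norm_qpoch_le) auto
  then show ?thesis by blast
qed

lemma norm_mult_q_power_le:
  assumes "norm y \<le> R"
  shows "norm (y * q ^ n) \<le> R"
proof -
  have "norm (y * q ^ n) \<le> norm y * 1"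
    unfolding norm_mult by (intro mult_left_mono norm_q_power_le_1) auto
  then show ?thesis
    using assms by simp
qed

lemma qpoch_product_ratio_bounded: "\<exists>K. \<forall>n. norm (qpoch A q n * qpoch B q n / qpoch q q n) \<le> K"
proof -
  obtain d where d: "d > 0" "\<And>n. d \<le> norm (qpoch q q n)"
    using qpoch_bounded_below[OF q_mult_q_power_neq_1] by blast
  have "norm (qpoch A q n * qpoch B q n / qpoch q q n) \<le>
      exp (norm A / (1 - norm q)) * exp (norm B / (1 - norm q)) / d" for n
    unfolding norm_mult norm_divide using d by (intro frac_le mult_mono norm_qpoch_le) auto
  then show ?thesis by blast
qed

lemma uniform_limit_qpoch:
  "uniform_limit (cball x0 r) (\<lambda>n x. qpoch x q n) (\<lambda>x. qpoch_inf x q) sequentially"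
proof -
  have "uniformly_convergent_on (cball x0 r) (\<lambda>N x. \<Sum>n<N. norm ((1 - x * q ^ n) - 1))"
  proof (rule Weierstrass_m_test')
    show "summable (\<lambda>n. (norm x0 + r) * norm q ^ n)"
      using norm_q by (intro summable_mult summable_geometric) auto
    fix n x assume "x \<in> cball x0 r"
    then have "norm x \<le> norm x0 + r"
      using norm_triangle_ineq2[of x x0] by (auto simp: dist_norm norm_minus_commute)
    then show "norm (norm ((1 - x * q ^ n) - 1)) \<le> (norm x0 + r) * norm q ^ n"
      by (simp add: norm_mult norm_power mult_right_mono)
  qed
  then have "uniformly_convergent_on (cball x0 r) (\<lambda>N x. qpoch x q N)"
    unfolding qpoch_def by (intro uniformly_convergent_on_prod') (auto intro!: continuous_intros)
  then obtain l where l: "uniform_limit (cball x0 r) (\<lambda>N x. qpoch x q N) l sequentially"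
    unfolding uniformly_convergent_on_def by blast
  moreover have "l x = qpoch_inf x q" if "x \<in> cball x0 r" for x
    using tendsto_uniform_limitI[OF l that] qpoch_tendsto by (rule LIMSEQ_unique)
  ultimately show ?thesis
    by (metis (mono_tags, lifting) uniform_limit_cong')
qed

lemma holomorphic_on_qpoch_inf [holomorphic_intros]:
  assumes "g holomorphic_on S"
  shows "(\<lambda>x. qpoch_inf (g x) q) holomorphic_on S"
proof -
  have "(\<lambda>x. qpoch_inf x q) holomorphic_on UNIV"
    by (rule holomorphic_uniform_sequence[where f = "\<lambda>n x. qpoch x q n"])
       (use uniform_limit_qpoch in \<open>auto intro!: holomorphic_intros exI[of _ 1]\<close>)
  then show ?thesis
    using holomorphic_on_compose[OF assms holomorphic_on_subset] by (auto simp: o_def)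
qed

section \<open>The q-binomial theorem and Heine's transformations\<close>

lemma qbinomial_functional_equation:
  fixes A w :: complex
  assumes w: "norm w < 1"
  defines "f \<equiv> \<lambda>n. qpoch A q n / qpoch q q n"
  shows "(1 - w) * (\<Sum>n. f n * w ^ n) = (1 - A * w) * (\<Sum>n. f n * (q * w) ^ n)"
proof -
  obtain K where K: "\<And>n. norm (f n) \<le> K"
    using qpoch_ratio_bounded[OF q_mult_q_power_neq_1] unfolding f_def by blast
  have qw: "norm (q * w) < 1"
    using norm_mult_less_one[OF w, of q] norm_q by (simp add: mult.commute)
  have s1: "summable (\<lambda>n. f n * w ^ n)" and s2: "summable (\<lambda>n. f n * (q * w) ^ n)"
    using summable_bounded_mult_geometric[OF K] w qw by auto
  have rec: "f (Suc n) * (1 - q ^ Suc n) = f n * (1 - A * q ^ n)" for n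
    using qpoch_q_nonzero[of n] qpoch_q_nonzero[of "Suc n"]
    by (simp add: f_def qpoch_Suc field_simps)
  have "(\<lambda>n. f n * w ^ n - f n * (q * w) ^ n) sums ((\<Sum>n. f n * w ^ n) - (\<Sum>n. f n * (q * w) ^ n))"
    using s1 s2 by (intro sums_diff summable_sums)
  moreover have "(\<lambda>n. f n * w ^ n - f n * (q * w) ^ n) = (\<lambda>n. f n * (1 - q ^ n) * w ^ n)"
    by (simp add: power_mult_distrib algebra_simps)
  ultimately have lhs: "(\<lambda>n. f n * (1 - q ^ n) * w ^ n) sums
      ((\<Sum>n. f n * w ^ n) - (\<Sum>n. f n * (q * w) ^ n))"
    by simp
  have "(\<lambda>n. w * (f n * w ^ n) - A * w * (f n * (q * w) ^ n)) sums
      (w * (\<Sum>n. f n * w ^ n) - A * w * (\<Sum>n. f n * (q * w) ^ n))"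
    using s1 s2 by (intro sums_diff sums_mult summable_sums)
  moreover have "(\<lambda>n. w * (f n * w ^ n) - A * w * (f n * (q * w) ^ n)) =
      (\<lambda>n. f (Suc n) * (1 - q ^ Suc n) * w ^ Suc n)"
    unfolding rec by (simp add: power_mult_distrib algebra_simps)
  ultimately have "(\<lambda>n. f (Suc n) * (1 - q ^ Suc n) * w ^ Suc n) sums
      (w * (\<Sum>n. f n * w ^ n) - A * w * (\<Sum>n. f n * (q * w) ^ n))"
    by simp
  then have "(\<lambda>n. f n * (1 - q ^ n) * w ^ n) sums
      (w * (\<Sum>n. f n * w ^ n) - A * w * (\<Sum>n. f n * (q * w) ^ n))"
    by (subst (asm) sums_Suc_iff) simp
  with lhs have "(\<Sum>n. f n * w ^ n) - (\<Sum>n. f n * (q * w) ^ n) =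
      w * (\<Sum>n. f n * w ^ n) - A * w * (\<Sum>n. f n * (q * w) ^ n)"
    by (rule sums_unique2)
  then show ?thesis
    by (simp add: algebra_simps)
qed

theorem qbinomial:
  fixes A z :: complex
  assumes z: "norm z < 1"
  shows "(\<lambda>n. qpoch A q n / qpoch q q n * z ^ n) sums (qpoch_inf (A * z) q / qpoch_inf z q)"
proof -
  define f where "f = (\<lambda>n. qpoch A q n / qpoch q q n)"
  define F where "F = (\<lambda>w. \<Sum>n. f n * w ^ n)"
  obtain K where K: "\<And>n. norm (f n) \<le> K"
    using qpoch_ratio_bounded[OF q_mult_q_power_neq_1] unfolding f_def by blast
  have zN: "norm (z * q ^ N) < 1" for N
    by (rule norm_mult_less_one[OF z norm_q_power_le_1])
  have iter: "F z * qpoch z q N = qpoch (A * z) q N * F (z * q ^ N)" for N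
  proof (induction N)
    case (Suc N)
    have "F z * qpoch z q (Suc N) = qpoch (A * z) q N * ((1 - z * q ^ N) * F (z * q ^ N))"
      using Suc by (simp add: qpoch_Suc mult_ac)
    also have "(1 - z * q ^ N) * F (z * q ^ N) = (1 - A * (z * q ^ N)) * F (q * (z * q ^ N))"
      unfolding F_def f_def by (rule qbinomial_functional_equation[OF zN])
    finally show ?case
      by (simp add: qpoch_Suc mult_ac)
  qed simp
  have "isCont F 0"
    unfolding F_def by (rule isCont_powser[of _ "1 / 2"])
      (use summable_bounded_mult_geometric[OF K, of "1 / 2"] in auto)
  moreover have "(\<lambda>N. z * q ^ N) \<longlonglongrightarrow> 0"
    using norm_q by (intro tendsto_mult_right_zero LIMSEQ_power_zero) auto
  ultimately have "(\<lambda>N. F (z * q ^ N)) \<longlonglongrightarrow> F 0"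
    by (rule isCont_tendsto_compose)
  also have "F 0 = 1"
    unfolding F_def powser_zero by (simp add: f_def)
  finally have "(\<lambda>N. F (z * q ^ N)) \<longlonglongrightarrow> 1" .
  then have "(\<lambda>N. qpoch (A * z) q N * F (z * q ^ N)) \<longlonglongrightarrow> qpoch_inf (A * z) q * 1"
    by (intro tendsto_mult qpoch_tendsto)
  then have "(\<lambda>N. F z * qpoch z q N) \<longlonglongrightarrow> qpoch_inf (A * z) q"
    unfolding iter by simp
  moreover have "(\<lambda>N. F z * qpoch z q N) \<longlonglongrightarrow> F z * qpoch_inf z q"
    by (intro tendsto_mult tendsto_const qpoch_tendsto)
  ultimately have "F z * qpoch_inf z q = qpoch_inf (A * z) q"
    using LIMSEQ_unique by blast
  moreover have "qpoch_inf z q \<noteq> 0"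
    by (rule qpoch_inf_nonzero[OF mult_q_power_neq_1[OF z]])
  ultimately have "F z = qpoch_inf (A * z) q / qpoch_inf z q"
    by (simp add: eq_divide_eq)
  moreover have "(\<lambda>n. f n * z ^ n) sums F z"
    unfolding F_def by (rule summable_sums[OF summable_bounded_mult_geometric[OF K z]])
  ultimately show ?thesis
    unfolding f_def by simp
qed

end

definition phi21_term :: "complex \<Rightarrow> complex \<Rightarrow> complex \<Rightarrow> complex \<Rightarrow> complex \<Rightarrow> nat \<Rightarrow> complex" where
  "phi21_term q A B C z n = qpoch A q n * qpoch B q n / (qpoch q q n * qpoch C q n) * z ^ n"

lemma phi21_term_commute: "phi21_term q A B C z = phi21_term q B A C z"
  by (simp add: fun_eq_iff phi21_term_def mult_ac)

context qseries
begin

lemma heine_double_series_rows: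
  assumes B: "norm B < 1" "B \<noteq> 0" and C: "\<And>k. C * q ^ k \<noteq> 1"
  shows "(\<lambda>m. qpoch A q n / qpoch q q n * (qpoch (C / B) q m / qpoch q q m) * z ^ n * B ^ m * q ^ (n * m))
    sums (qpoch_inf C q / qpoch_inf B q * phi21_term q A B C z n)"
proof -
  define a where "a = qpoch A q n / qpoch q q n"
  define c where "c m = qpoch (C / B) q m / qpoch q q m" for m
  have "norm (B * q ^ n) < 1"
    by (rule norm_mult_less_one[OF B(1) norm_q_power_le_1])
  then have "(\<lambda>m. c m * (B * q ^ n) ^ m) sums (qpoch_inf (C * q ^ n) q / qpoch_inf (B * q ^ n) q)"
    using qbinomial[of "B * q ^ n" "C / B"] B(2) unfolding c_def by (simp add: mult_ac)
  from sums_mult[OF this, of "a * z ^ n"]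
  have "(\<lambda>m. a * z ^ n * (c m * (B * q ^ n) ^ m)) sums
      (a * z ^ n * (qpoch_inf (C * q ^ n) q / qpoch_inf (B * q ^ n) q))" .
  moreover have "(\<lambda>m. a * z ^ n * (c m * (B * q ^ n) ^ m)) = (\<lambda>m. a * c m * z ^ n * B ^ m * q ^ (n * m))"
    by (rule ext) (simp add: power_mult_distrib power_mult[symmetric] mult.commute[of n] mult_ac)
  moreover have "qpoch_inf C q = qpoch C q n * qpoch_inf (C * q ^ n) q"
    and "qpoch_inf B q = qpoch B q n * qpoch_inf (B * q ^ n) q"
    by (rule qpoch_inf_split)+
  ultimately show ?thesis
    using qpoch_nonzero[of n C q] qpoch_nonzero[of n B q] C mult_q_power_neq_1[OF B(1)]
      qpoch_inf_nonzero_shift[OF C] qpoch_inf_nonzero_shift[OF mult_q_power_neq_1[OF B(1)]]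
      qpoch_q_nonzero[of n]
    by (simp add: phi21_term_def a_def c_def field_simps)
qed

lemma heine_double_series_columns:
  assumes z: "norm z < 1" and Az: "\<And>k. A * z * q ^ k \<noteq> 1"
  shows "(\<lambda>n. qpoch A q n / qpoch q q n * (qpoch (C / B) q m / qpoch q q m) * z ^ n * B ^ m * q ^ (n * m))
    sums (qpoch_inf (A * z) q / qpoch_inf z q * phi21_term q (C / B) z (A * z) B m)"
proof -
  define a where "a n = qpoch A q n / qpoch q q n" for n
  define c where "c = qpoch (C / B) q m / qpoch q q m"
  have "norm (z * q ^ m) < 1"
    by (rule norm_mult_less_one[OF z norm_q_power_le_1])
  then have "(\<lambda>n. a n * (z * q ^ m) ^ n) sums (qpoch_inf (A * (z * q ^ m)) q / qpoch_inf (z * q ^ m) q)"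
    using qbinomial unfolding a_def by blast
  from sums_mult[OF this, of "c * B ^ m"]
  have "(\<lambda>n. c * B ^ m * (a n * (z * q ^ m) ^ n)) sums
      (c * B ^ m * (qpoch_inf (A * z * q ^ m) q / qpoch_inf (z * q ^ m) q))"
    by (simp add: mult_ac)
  moreover have "(\<lambda>n. c * B ^ m * (a n * (z * q ^ m) ^ n)) = (\<lambda>n. a n * c * z ^ n * B ^ m * q ^ (n * m))"
    by (rule ext) (simp add: power_mult_distrib power_mult[symmetric] mult_ac)
  moreover have "qpoch_inf (A * z * q ^ m) q = qpoch_inf (A * z) q / qpoch (A * z) q m"
    by (rule qpoch_inf_shift) (use Az in auto)
  moreover have "qpoch_inf (z * q ^ m) q = qpoch_inf z q / qpoch z q m"
    by (rule qpoch_inf_shift) (use mult_q_power_neq_1[OF z] in auto)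
  ultimately show ?thesis
    using qpoch_inf_nonzero[OF mult_q_power_neq_1[OF z]] qpoch_nonzero[of m "A * z" q] Az
      qpoch_nonzero[of m z q] mult_q_power_neq_1[OF z] qpoch_q_nonzero[of m]
    by (simp add: phi21_term_def a_def c_def field_simps)
qed

theorem heine_transformation:
  assumes B: "norm B < 1" "B \<noteq> 0" and z: "norm z < 1"
    and C: "\<And>k. C * q ^ k \<noteq> 1" and Az: "\<And>k. A * z * q ^ k \<noteq> 1"
  shows "phi21_term q A B C z sums
    (qpoch_inf B q * qpoch_inf (A * z) q / (qpoch_inf C q * qpoch_inf z q) *
     suminf (phi21_term q (C / B) z (A * z) B))"
proof -
  define g where "g n m = qpoch A q n / qpoch q q n * (qpoch (C / B) q m / qpoch q q m) *
    z ^ n * B ^ m * q ^ (n * m)" for n m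
  obtain Ka where Ka: "\<And>n. norm (qpoch A q n / qpoch q q n) \<le> Ka"
    using qpoch_ratio_bounded[OF q_mult_q_power_neq_1] by blast
  obtain Kc where Kc: "\<And>m. norm (qpoch (C / B) q m / qpoch q q m) \<le> Kc"
    using qpoch_ratio_bounded[OF q_mult_q_power_neq_1] by blast
  have "norm (g n m) \<le> Ka * Kc * norm z ^ n * norm B ^ m * 1" for n m
    unfolding g_def norm_mult norm_power using order.trans[OF norm_ge_zero Ka] order.trans[OF norm_ge_zero Kc]
      norm_q by (intro mult_mono Ka Kc power_le_one mult_nonneg_nonneg) auto
  then have swap: "(\<Sum>n. \<Sum>m. g n m) = (\<Sum>m. \<Sum>n. g n m)"
      "summable (\<lambda>n. \<Sum>m. g n m)" "summable (\<lambda>m. \<Sum>n. g n m)"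
    using suminf_swap_geometric[of g "Ka * Kc" "norm z" "norm B"] B z by auto
  have rows: "(\<Sum>m. g n m) = qpoch_inf C q / qpoch_inf B q * phi21_term q A B C z n" for n
    unfolding g_def using heine_double_series_rows[OF B C] by (rule sums_unique[symmetric])
  have cols: "(\<Sum>n. g n m) = qpoch_inf (A * z) q / qpoch_inf z q * phi21_term q (C / B) z (A * z) B m" for m
    unfolding g_def using heine_double_series_columns[OF z Az] by (rule sums_unique[symmetric])
  have nonzero: "qpoch_inf (A * z) q / qpoch_inf z q \<noteq> 0"
    using qpoch_inf_nonzero[OF mult_q_power_neq_1[OF z]] qpoch_inf_nonzero[of "A * z"] Az by auto
  have "summable (\<lambda>m. qpoch_inf (A * z) q / qpoch_inf z q * phi21_term q (C / B) z (A * z) B m)"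
    using swap(3) unfolding cols .
  then have "summable (phi21_term q (C / B) z (A * z) B)"
    by (rule summable_mult_D[OF _ nonzero])
  then have "(\<Sum>m. \<Sum>n. g n m) =
      qpoch_inf (A * z) q / qpoch_inf z q * suminf (phi21_term q (C / B) z (A * z) B)"
    unfolding cols by (rule suminf_mult)
  then have "(\<lambda>n. \<Sum>m. g n m) sums
      (qpoch_inf (A * z) q / qpoch_inf z q * suminf (phi21_term q (C / B) z (A * z) B))"
    using summable_sums[OF swap(2)] unfolding swap(1) by simp
  then have "(\<lambda>n. qpoch_inf B q / qpoch_inf C q * (\<Sum>m. g n m)) sums
      (qpoch_inf B q / qpoch_inf C q *
        (qpoch_inf (A * z) q / qpoch_inf z q * suminf (phi21_term q (C / B) z (A * z) B)))"
    by (rule sums_mult)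
  moreover have "qpoch_inf B q / qpoch_inf C q * (\<Sum>m. g n m) = phi21_term q A B C z n" for n
    using qpoch_inf_nonzero[OF C] qpoch_inf_nonzero[OF mult_q_power_neq_1[OF B(1)]]
    unfolding rows by simp
  ultimately show ?thesis
    by (simp add: mult_ac)
qed

theorem q_gauss:
  assumes B: "norm B < 1" "B \<noteq> 0" and A: "A \<noteq> 0" and z: "norm (C / (A * B)) < 1"
    and C: "\<And>k. C * q ^ k \<noteq> 1" and CB: "\<And>k. C / B * q ^ k \<noteq> 1"
  shows "phi21_term q A B C (C / (A * B)) sums
    (qpoch_inf (C / A) q * qpoch_inf (C / B) q / (qpoch_inf C q * qpoch_inf (C / (A * B)) q))"
proof -
  define z where "z = C / (A * B)"
  have Az: "A * z = C / B"
    using A by (simp add: z_def)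
  have "phi21_term q (C / B) z (C / B) B = (\<lambda>n. qpoch z q n / qpoch q q n * B ^ n)"
    using qpoch_nonzero[of _ "C / B" q] CB by (simp add: fun_eq_iff phi21_term_def)
  then have inner: "qpoch_inf B q * suminf (phi21_term q (C / B) z (C / B) B) = qpoch_inf (C / A) q"
    using qbinomial[OF B(1), of z] qpoch_inf_nonzero[OF mult_q_power_neq_1[OF B(1)]] B(2)
    by (simp add: sums_iff z_def mult.commute)
  have "A * z * q ^ k \<noteq> 1" for k
    using CB[of k] by (simp add: Az)
  from heine_transformation[OF B _ C this] z
  have "phi21_term q A B C z sums (qpoch_inf B q * qpoch_inf (C / B) q / (qpoch_inf C q * qpoch_inf z q) *
      suminf (phi21_term q (C / B) z (C / B) B))"
    unfolding Az z_def[symmetric] by simp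
  also have "qpoch_inf B q * qpoch_inf (C / B) q / (qpoch_inf C q * qpoch_inf z q) *
      suminf (phi21_term q (C / B) z (C / B) B) =
      qpoch_inf (C / B) q / (qpoch_inf C q * qpoch_inf z q) *
      (qpoch_inf B q * suminf (phi21_term q (C / B) z (C / B) B))"
    by (simp add: field_simps)
  finally show ?thesis
    unfolding inner z_def[symmetric] by (simp add: mult_ac)
qed

lemma summable_phi21_term:
  assumes z: "norm z < 1" and C: "\<And>k. C * q ^ k \<noteq> 1"
  shows "summable (phi21_term q A B C z)"
proof -
  obtain d1 where d1: "d1 > 0" "\<And>n. d1 \<le> norm (qpoch q q n)"
    using qpoch_bounded_below[OF q_mult_q_power_neq_1] by blast
  obtain d2 where d2: "d2 > 0" "\<And>n. d2 \<le> norm (qpoch C q n)"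
    using qpoch_bounded_below[OF C] by blast
  have "norm (qpoch A q n * qpoch B q n / (qpoch q q n * qpoch C q n)) \<le>
      exp (norm A / (1 - norm q)) * exp (norm B / (1 - norm q)) / (d1 * d2)" for n
    unfolding norm_mult norm_divide using d1 d2
    by (intro frac_le mult_mono norm_qpoch_le mult_pos_pos mult_nonneg_nonneg) auto
  then show ?thesis
    unfolding phi21_term_def by (rule summable_bounded_mult_geometric[OF _ z])
qed

lemma qpoch_inf_times_phi21_series:
  assumes z: "norm z < 1" and C: "\<And>k. C * q ^ k \<noteq> 1"
  shows "qpoch_inf C q * suminf (phi21_term q A B C z) =
    (\<Sum>n. qpoch A q n * qpoch B q n / qpoch q q n * z ^ n * qpoch_inf (C * q ^ n) q)"
proof -
  have "qpoch_inf C q * suminf (phi21_term q A B C z) = (\<Sum>n. qpoch_inf C q * phi21_term q A B C z n)"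
    by (rule suminf_mult[OF summable_phi21_term[OF z C], symmetric])
  also have "\<dots> = (\<Sum>n. qpoch A q n * qpoch B q n / qpoch q q n * z ^ n * qpoch_inf (C * q ^ n) q)"
  proof (rule suminf_cong)
    fix n
    have split: "qpoch_inf C q = qpoch C q n * qpoch_inf (C * q ^ n) q"
      by (rule qpoch_inf_split)
    show "qpoch_inf C q * phi21_term q A B C z n =
        qpoch A q n * qpoch B q n / qpoch q q n * z ^ n * qpoch_inf (C * q ^ n) q"
      unfolding split phi21_term_def using qpoch_nonzero[of n C q] C qpoch_q_nonzero[of n]
      by (simp add: field_simps)
  qed
  finally show ?thesis .
qed

theorem q_euler_transformation:
  assumes B: "norm B < 1" "B \<noteq> 0" and z: "norm z < 1" "z \<noteq> 0" and A: "A \<noteq> 0"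
    and CB: "norm (C / B) < 1" "C \<noteq> 0" and w: "norm (A * B * z / C) < 1"
    and C: "\<And>k. C * q ^ k \<noteq> 1" and Az: "\<And>k. A * z * q ^ k \<noteq> 1"
  shows "suminf (phi21_term q A B C z) = qpoch_inf (A * B * z / C) q / qpoch_inf z q *
    suminf (phi21_term q (C / A) (C / B) C (A * B * z / C))"
proof -
  have nz: "qpoch_inf x q \<noteq> 0" if "norm x < 1" for x
    by (rule qpoch_inf_nonzero[OF mult_q_power_neq_1[OF that]])
  have Bz: "norm (B * z) < 1" and zB: "norm (z * B) < 1"
    using B z by (simp_all add: norm_mult_less_one less_imp_le)
  have s1: "suminf (phi21_term q A B C z) = qpoch_inf B q * qpoch_inf (A * z) q /
      (qpoch_inf C q * qpoch_inf z q) * suminf (phi21_term q (C / B) z (A * z) B)"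
    using heine_transformation[OF B z(1) C Az] by (simp add: sums_iff)
  have s2: "suminf (phi21_term q z (C / B) (A * z) B) = qpoch_inf (C / B) q * qpoch_inf (z * B) q /
      (qpoch_inf (A * z) q * qpoch_inf B q) * suminf (phi21_term q (A * z / (C / B)) B (z * B) (C / B))"
    using heine_transformation[OF CB(1) _ B(1) Az, of z] CB B
    by (auto simp: sums_iff mult_q_power_neq_1[OF zB])
  have s3: "suminf (phi21_term q B (A * B * z / C) (B * z) (C / B)) =
      qpoch_inf (A * B * z / C) q * qpoch_inf C q / (qpoch_inf (B * z) q * qpoch_inf (C / B) q) *
      suminf (phi21_term q (B * z / (A * B * z / C)) (C / B) C (A * B * z / C))"
  proof -
    have "A * B * z / C \<noteq> 0" "B * (C / B) = C"
      using A B z CB by auto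
    then show ?thesis
      using heine_transformation[OF w _ CB(1) mult_q_power_neq_1[OF Bz], of B] C
      by (auto simp: sums_iff)
  qed
  have "A * z / (C / B) = A * B * z / C" "B * z / (A * B * z / C) = C / A"
    using A B(2) z(2) CB(2) by (simp_all add: field_simps)
  moreover have "phi21_term q (A * B * z / C) B (z * B) (C / B) =
      phi21_term q B (A * B * z / C) (B * z) (C / B)"
    by (simp add: phi21_term_commute mult.commute)
  moreover have "qpoch_inf (A * z) q \<noteq> 0"
    using qpoch_inf_nonzero[of "A * z"] Az by (simp add: mult_ac)
  ultimately show ?thesis
    unfolding s1 phi21_term_commute[of q "C / B"] s2
    using s3 nz[OF B(1)] nz[OF CB(1)] nz[OF Bz] nz[OF z(1)] qpoch_inf_nonzero[OF C]
    by (simp add: mult.commute[of z B] field_simps)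
qed

lemma holomorphic_on_qpoch_inf_series:
  assumes z: "norm z < 1" and f: "\<And>n. norm (f n) \<le> K"
  shows "(\<lambda>C. \<Sum>n. f n * z ^ n * qpoch_inf (C * q ^ n) q) holomorphic_on S"
proof -
  have "(\<lambda>C. \<Sum>n. f n * z ^ n * qpoch_inf (C * q ^ n) q) holomorphic_on UNIV"
  proof (rule holomorphic_on_suminf)
    fix x :: complex
    define E where "E = exp ((norm x + 1) / (1 - norm q))"
    have "norm (f n * z ^ n * qpoch_inf (y * q ^ n) q) \<le> K * E * norm z ^ n"
      if "y \<in> cball x 1" for n y
    proof -
      have "norm y \<le> norm x + 1"
        using that norm_triangle_ineq2[of y x] by (auto simp: dist_norm norm_minus_commute)
      then have "norm (qpoch_inf (y * q ^ n) q) \<le> E"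
        unfolding E_def by (intro norm_qpoch_inf_le norm_mult_q_power_le)
      then have "norm (f n) * norm z ^ n * norm (qpoch_inf (y * q ^ n) q) \<le> K * norm z ^ n * E"
        using order.trans[OF norm_ge_zero f] by (intro mult_mono f) auto
      then show ?thesis
        by (simp add: norm_mult norm_power mult_ac)
    qed
    moreover have "summable (\<lambda>n. K * E * norm z ^ n)"
      using z by (intro summable_mult summable_geometric) auto
    ultimately show "\<exists>d>0. cball x d \<subseteq> UNIV \<and> (\<exists>M. summable M \<and>
        (\<forall>n. \<forall>y\<in>cball x d. norm (f n * z ^ n * qpoch_inf (y * q ^ n) q) \<le> M n))"
      by (intro exI[of _ 1] conjI exI[of _ "\<lambda>n. K * E * norm z ^ n"]) auto
  qed (auto intro!: holomorphic_intros)
  then show ?thesis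
    by (rule holomorphic_on_subset) auto
qed

lemma dual_series_term_bound:
  assumes "0 < r"
  shows "\<exists>E. \<forall>n y. r \<le> norm y \<longrightarrow> norm y \<le> R \<longrightarrow>
    norm (qpoch (y / A) q n * qpoch (y / B) q n / qpoch q q n * (w / y) ^ n * qpoch_inf (y * q ^ n) q)
      \<le> E * (norm w / r) ^ n"
proof -
  obtain d where d: "d > 0" "\<And>n. d \<le> norm (qpoch q q n)"
    using qpoch_bounded_below[OF q_mult_q_power_neq_1] by blast
  define E where "E = exp (R / norm A / (1 - norm q)) * exp (R / norm B / (1 - norm q)) *
    exp (R / (1 - norm q)) / d"
  have "norm (qpoch (y / A) q n * qpoch (y / B) q n / qpoch q q n * (w / y) ^ n * qpoch_inf (y * q ^ n) q)
      \<le> E * (norm w / r) ^ n" if y: "r \<le> norm y" "norm y \<le> R" for n y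
  proof -
    have "norm (w / y) \<le> norm w / r"
      unfolding norm_divide using y assms by (intro divide_left_mono mult_pos_pos) auto
    moreover have "norm (y / A) \<le> R / norm A" "norm (y / B) \<le> R / norm B"
      using y by (simp_all add: norm_divide divide_right_mono)
    ultimately have "norm (qpoch (y / A) q n) * norm (qpoch (y / B) q n) * norm (qpoch_inf (y * q ^ n) q) /
        norm (qpoch q q n) * norm (w / y) ^ n \<le> E * (norm w / r) ^ n"
      unfolding E_def using y d
      by (intro mult_mono frac_le norm_qpoch_le norm_qpoch_inf_le norm_mult_q_power_le power_mono) auto
    then show ?thesis
      by (simp add: norm_mult norm_divide norm_power mult_ac)
  qed
  then show ?thesis
    by blast
qed

lemma holomorphic_on_dual_series:
  "(\<lambda>C. \<Sum>m. qpoch (C / A) q m * qpoch (C / B) q m / qpoch q q m * (w / C) ^ m * qpoch_inf (C * q ^ m) q)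
     holomorphic_on {C. norm w < norm C}"
proof (rule holomorphic_on_suminf)
  show "open {C :: complex. norm w < norm C}"
    by (intro open_Collect_less continuous_intros)
  show "(\<lambda>C. qpoch (C / A) q m * qpoch (C / B) q m / qpoch q q m * (w / C) ^ m * qpoch_inf (C * q ^ m) q)
      holomorphic_on {C. norm w < norm C}" for m
    by (intro holomorphic_intros) (auto dest: order.strict_trans1[OF norm_ge_zero])
  fix x :: complex
  assume x: "x \<in> {C. norm w < norm C}"
  define d where "d = (norm x - norm w) / 2"
  define r where "r = norm x - d"
  have d: "d > 0" and r: "norm w < r"
    using x by (simp_all add: d_def r_def field_simps)
  then have "0 < r"
    using norm_ge_zero[of w] by linarith
  then obtain E where E: "\<And>n y. r \<le> norm y \<Longrightarrow> norm y \<le> norm x + d \<Longrightarrow>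
      norm (qpoch (y / A) q n * qpoch (y / B) q n / qpoch q q n * (w / y) ^ n * qpoch_inf (y * q ^ n) q)
        \<le> E * (norm w / r) ^ n"
    using dual_series_term_bound[of r "norm x + d" A B w] by blast
  have bounds: "r \<le> norm y \<and> norm y \<le> norm x + d" if "y \<in> cball x d" for y
    using that norm_triangle_ineq2[of y x] norm_triangle_ineq2[of x y]
    by (auto simp: dist_norm norm_minus_commute r_def)
  have "cball x d \<subseteq> {C. norm w < norm C}"
    using bounds r by force
  moreover have "summable (\<lambda>n. E * (norm w / r) ^ n)"
    using r \<open>0 < r\<close> by (intro summable_mult summable_geometric) auto
  ultimately show "\<exists>d>0. cball x d \<subseteq> {C. norm w < norm C} \<and> (\<exists>M. summable M \<and> (\<forall>n. \<forall>y\<in>cball x d.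
      norm (qpoch (y / A) q n * qpoch (y / B) q n / qpoch q q n * (w / y) ^ n * qpoch_inf (y * q ^ n) q) \<le> M n))"
    using d bounds E by blast
qed

text \<open>
  The transformation was derived for |A B z| < |C| < |B| only; multiplied by (C;q)_inf, both sides
  are holomorphic on all of |C| > |A B z|, a region that contains C = -1.
\<close>
lemma q_euler_transformation_continued:
  assumes A: "A \<noteq> 0" and B: "norm B < 1" "B \<noteq> 0" and z: "norm z < 1" "z \<noteq> 0"
    and w: "norm (A * B * z) < norm B" and Az: "\<And>k. A * z * q ^ k \<noteq> 1"
    and C: "norm (A * B * z) < norm C"
  shows "(\<Sum>n. qpoch A q n * qpoch B q n / qpoch q q n * z ^ n * qpoch_inf (C * q ^ n) q) =
    qpoch_inf (A * B * z / C) q / qpoch_inf z q * (\<Sum>m. qpoch (C / A) q m * qpoch (C / B) q m /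
      qpoch q q m * (A * B * z / C) ^ m * qpoch_inf (C * q ^ m) q)"
proof -
  define w where "w = A * B * z"
  define S where "S = {C :: complex. norm w < norm C}"
  define L where "L C = (\<Sum>n. qpoch A q n * qpoch B q n / qpoch q q n * z ^ n * qpoch_inf (C * q ^ n) q)"
    for C
  define R where "R C = qpoch_inf (w / C) q / qpoch_inf z q * (\<Sum>m. qpoch (C / A) q m * qpoch (C / B) q m /
    qpoch q q m * (w / C) ^ m * qpoch_inf (C * q ^ m) q)" for C
  have w_less: "norm w < norm C \<Longrightarrow> norm (w / C) < 1" for C
    by (auto simp: norm_divide divide_less_eq)
  have "L C = R C"
  proof (rule analytic_continuation_from_annulus[where f = L and g = R and S = S and r = "norm w" and s = "norm B"])
    obtain K where "\<And>n. norm (qpoch A q n * qpoch B q n / qpoch q q n) \<le> K"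
      using qpoch_product_ratio_bounded by blast
    then show "L holomorphic_on S"
      unfolding L_def by (rule holomorphic_on_qpoch_inf_series[OF z(1)])
    show "R holomorphic_on S"
      unfolding R_def S_def using holomorphic_on_dual_series
      by (intro holomorphic_intros) (auto dest: order.strict_trans1[OF norm_ge_zero])
    show "open S"
      unfolding S_def by (intro open_Collect_less continuous_intros)
    have "S = - cball 0 (norm w)"
      by (auto simp: S_def)
    then show "connected S"
      by (simp add: connected_complement_bounded_convex)
    show "{C. norm w < norm C \<and> norm C < norm B} \<subseteq> S" "0 \<le> norm w" "norm w < norm B" "C \<in> S"
      using w C by (auto simp: S_def w_def)
    fix u :: complex
    assume u: "norm w < norm u" "norm u < norm B"
    then have "u \<noteq> 0" "norm u < 1" "norm (u / B) < 1"
      using B by (auto simp: norm_divide divide_less_eq)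
    with u have euler: "suminf (phi21_term q A B u z) =
        qpoch_inf (w / u) q / qpoch_inf z q * suminf (phi21_term q (u / A) (u / B) u (w / u))"
      using w_less[of u] unfolding w_def by (intro q_euler_transformation A B z Az mult_q_power_neq_1) auto
    have "L u = qpoch_inf u q * suminf (phi21_term q A B u z)"
      unfolding L_def by (rule qpoch_inf_times_phi21_series[OF z(1) mult_q_power_neq_1, symmetric]) fact
    moreover have "R u = qpoch_inf (w / u) q / qpoch_inf z q *
        (qpoch_inf u q * suminf (phi21_term q (u / A) (u / B) u (w / u)))"
      unfolding R_def using qpoch_inf_times_phi21_series[OF w_less[OF u(1)] mult_q_power_neq_1]
        \<open>norm u < 1\<close> by simp
    ultimately show "L u = R u"
      unfolding euler by (simp add: mult_ac)
  qed
  then show ?thesis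
    by (simp add: L_def R_def w_def)
qed

theorem q_euler_transformation_minus_one:
  assumes A: "A \<noteq> 0" and B: "norm B < 1" "B \<noteq> 0" and z: "norm z < 1" "z \<noteq> 0"
    and w: "norm (A * B * z) < norm B" and Az: "\<And>k. A * z * q ^ k \<noteq> 1"
  shows "suminf (phi21_term q A B (- 1) z) = qpoch_inf (- (A * B * z)) q / qpoch_inf z q *
    suminf (phi21_term q (- 1 / A) (- 1 / B) (- 1) (- (A * B * z)))"
proof -
  have "norm (- (A * B * z)) < 1"
    using w B by simp
  then have "qpoch_inf (- 1) q * suminf (phi21_term q A B (- 1) z) = qpoch_inf (- 1) q *
      (qpoch_inf (- (A * B * z)) q / qpoch_inf z q *
        suminf (phi21_term q (- 1 / A) (- 1 / B) (- 1) (- (A * B * z))))"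
    using q_euler_transformation_continued[OF assms, of "- 1"] w B
      qpoch_inf_times_phi21_series[OF z(1) minus_one_mult_q_power_neq_1, of A B]
      qpoch_inf_times_phi21_series[OF _ minus_one_mult_q_power_neq_1, of "- (A * B * z)" "- 1 / A" "- 1 / B"]
    by (simp add: field_simps)
  then show ?thesis
    by (rule mult_left_cancel[THEN iffD1, OF qpoch_inf_nonzero[OF minus_one_mult_q_power_neq_1]])
qed

end

section \<open>A Bailey pair\<close>

lemma S_sum_minus_one: "S_sum q (-1) = 0"
  by (simp add: S_sum_def)

lemma S_sum_0: "S_sum q 0 = 1"
  by (simp add: S_sum_def)

lemma S_sum_Suc:
  fixes q :: complex
  assumes q0: "q \<noteq> 0"
  shows "S_sum q (int (Suc m)) = S_sum q (int m) + 2 * (-1) ^ Suc m / q ^ (Suc m * Suc m)"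
proof -
  define k where "k = int (Suc m)"
  have iv: "{-k..k} = insert (-k) (insert k {-(k-1)..k-1})" by (auto simp: k_def)
  have fin: "finite {-(k-1)..k-1}" by simp
  have nk: "-k \<notin> insert k {-(k-1)..k-1}" "k \<notin> {-(k-1)..k-1}" by (auto simp: k_def)
  have e1: "(-1 :: complex) powi (-k) = (-1) ^ Suc m"
  proof -
    have "(-1 :: complex) powi (-k) = inverse ((-1) ^ Suc m)"
      unfolding k_def by (simp only: power_int_minus power_int_of_nat)
    also have "\<dots> = (-1) ^ Suc m" by (metis power_inverse inverse_minus_eq inverse_1)
    finally show ?thesis .
  qed
  have e2: "(-1 :: complex) powi k = (-1) ^ Suc m" unfolding k_def by (simp only: power_int_of_nat)
  have sq: "(-k)^2 = int (Suc m * Suc m)" "k^2 = int (Suc m * Suc m)"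
    by (simp_all only: k_def power2_eq_square of_nat_mult minus_mult_minus)
  have e3: "q powi (-((-k)^2)) = 1 / q ^ (Suc m * Suc m)"
    unfolding sq by (simp only: power_int_minus power_int_of_nat divide_inverse mult_1)
  have e4: "q powi (-(k^2)) = 1 / q ^ (Suc m * Suc m)"
    unfolding sq by (simp only: power_int_minus power_int_of_nat divide_inverse mult_1)
  have "S_sum q k = (-1) powi (-k) * q powi (-((-k)^2)) + ((-1) powi k * q powi (-(k^2)) + S_sum q (k - 1))"
    unfolding S_sum_def iv using fin nk by (simp add: sum.insert)
  also have "S_sum q (k - 1) = S_sum q (int m)" by (simp add: k_def)
  finally have X: "S_sum q k = (-1) powi (-k) * q powi (-((-k)^2)) + ((-1) powi k * q powi (-(k^2)) + S_sum q (int m))" .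
  have "S_sum q k = (-1) ^ Suc m * (1 / q ^ (Suc m * Suc m)) + ((-1) ^ Suc m * (1 / q ^ (Suc m * Suc m)) + S_sum q (int m))"
    using X unfolding e1 e2 e3 e4 .
  then show ?thesis unfolding k_def by (simp add: field_simps)
qed

text \<open>
  Multiplied by (q;q)_N, this is the alternating sum of q-binomial coefficients; Gauss showed that it
  vanishes for odd N and equals (q;q^2)_(N/2) for even N.
\<close>
definition alt_qbinom_sum :: "complex \<Rightarrow> nat \<Rightarrow> complex" where
  "alt_qbinom_sum q N = (\<Sum>a\<le>N. (-1) ^ a / (qpoch q q a * qpoch q q (N - a)))"

text \<open>Only meaningful for r \<le> n, because n - r is truncated subtraction.\<close>
definition bailey_kernel :: "complex \<Rightarrow> nat \<Rightarrow> nat \<Rightarrow> complex" where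
  "bailey_kernel q n r = 1 / (qpoch q q (n - r) * qpoch q q (n + r))"

definition bailey_alpha :: "complex \<Rightarrow> nat \<Rightarrow> complex" where
  "bailey_alpha q r = q ^ (r * r - r) * (1 + q ^ r) * (q ^ r * S_sum q (int r) - S_sum q (int r - 1))"

definition bailey_telescope :: "complex \<Rightarrow> nat \<Rightarrow> nat \<Rightarrow> complex" where
  "bailey_telescope q n r = (if r = 0 \<or> n < r then 0 else
      - S_sum q (int r - 1) * q ^ (r * r - r) / (qpoch q q (n - r) * qpoch q q (n + r - 1)))"

lemma S_sum_step:
  assumes "q \<noteq> 0" "0 < r"
  shows "S_sum q (int r) * q ^ (r * r) = S_sum q (int r - 1) * q ^ (r * r) + 2 * (-1) ^ r"
proof -
  obtain m where "r = Suc m"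
    using assms(2) by (cases r) auto
  then show ?thesis
    using S_sum_Suc[OF assms(1), of m] assms(1) by (simp add: field_simps)
qed

lemma norm_power_mult_S_sum_le:
  assumes q0: "q \<noteq> 0" and q1: "norm q \<le> 1" and N: "m * m \<le> N"
  shows "norm (q ^ N * S_sum q (int m)) \<le> 2 * real m + 1"
proof -
  have "norm (q ^ N * S_sum q (int m)) = norm (\<Sum>j\<in>{- int m..int m}. (-1) powi j * (q ^ N * q powi (- (j^2))))"
    unfolding S_sum_def sum_distrib_left by (simp add: mult_ac)
  also have "\<dots> \<le> (\<Sum>j\<in>{- int m..int m}. norm ((-1) powi j * (q ^ N * q powi (- (j^2)))))"
    by (rule norm_sum)
  also have "\<dots> \<le> (\<Sum>j\<in>{- int m..int m}. 1)"
  proof (rule sum_mono)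
    fix j assume j: "j \<in> {- int m..int m}"
    have "0 \<le> (int m - j) * (int m + j)" using j by (intro mult_nonneg_nonneg) auto
    then have jm: "j^2 \<le> int (m * m)" by (simp add: power2_eq_square algebra_simps)
    have nq: "norm q \<noteq> 0" using q0 by simp
    have "norm ((-1) powi j * (q ^ N * q powi (- (j^2)))) = norm q powi (int N) * norm q powi (- (j^2))"
      by (simp add: norm_mult norm_power_int norm_power power_int_of_nat)
    also have "\<dots> = norm q powi (int N - j^2)"
      using power_int_add[of "norm q" "int N" "- (j^2)"] nq by simp
    also have "\<dots> \<le> 1"
    proof -
      have "int (m * m) \<le> int N" using N by (simp only: of_nat_le_iff)
      then have jN: "j^2 \<le> int N" by (rule order.trans[OF jm])
      show ?thesis using jN q1 by (intro power_int_le_one) auto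
    qed
    finally show "norm ((-1) powi j * (q ^ N * q powi (- (j^2)))) \<le> 1" .
  qed
  also have "\<dots> = 2 * real m + 1" by simp
  finally show ?thesis .
qed

lemma square_diff_add: "r * r - r + r = r * (r :: nat)"
  using le_square[of r] by simp

lemma Suc_square_diff: "Suc r * Suc r - Suc r = (r * r - r) + r + r"
proof -
  have "Suc r * Suc r - Suc r = r * r + r" by simp
  then show ?thesis using square_diff_add[of r] by simp
qed

lemma minus_one_power_diff: "r \<le> n \<Longrightarrow> (-1 :: complex) ^ (n - r) = (-1) ^ n * (-1) ^ r"
proof -
  assume "r \<le> n"
  then have "(-1 :: complex) ^ n = (-1) ^ (n - r) * (-1) ^ r" by (simp add: power_add[symmetric])
  then have "(-1 :: complex) ^ n * (-1) ^ r = (-1) ^ (n - r) * ((-1) ^ r * (-1) ^ r)" by (simp add: mult_ac)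
  also have "(-1 :: complex) ^ r * (-1) ^ r = 1" by (simp add: power_add[symmetric] flip: mult_2)
  finally show ?thesis by simp
qed

lemma bailey_telescoping_algebra_interior:
  fixes W X Yp S Sr Pm Qm sg u v :: complex
  assumes nz: "W \<noteq> 0" "X \<noteq> 0" "Pm \<noteq> 0" "Qm \<noteq> 0" "u \<noteq> 0" "v \<noteq> 0"
    and Sr: "Sr * (W * X) = S * (W * X) + 2 * sg" and hu: "u = 1 - Yp" and hv: "v = 1 - Yp * X * X"
  shows "W * (1 + X) * (X * Sr - S) * (1 / (Pm * u * (Qm * v)))
    = (1 + Yp * X) * (2 * sg * (1 / (Pm * u * (Qm * v))))
      + ((- S * W / (Pm * u * Qm)) - (- Sr * (W * X * X) / (Pm * (Qm * v))))"
proof -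
  have num: "W * (1 + X) * (X * Sr - S) - (1 + Yp * X) * (2 * sg) + S * W * v - Sr * (W * X * X) * u
      = (Sr * (W * X) - S * (W * X) - 2 * sg) * (1 + X * Yp)"
    unfolding hu hv by (simp add: algebra_simps)
  have "W * (1 + X) * (X * Sr - S) * (1 / (Pm * u * (Qm * v))) - ((1 + Yp * X) * (2 * sg * (1 / (Pm * u * (Qm * v))))
      + ((- S * W / (Pm * u * Qm)) - (- Sr * (W * X * X) / (Pm * (Qm * v)))))
    = (W * (1 + X) * (X * Sr - S) - (1 + Yp * X) * (2 * sg) + S * W * v - Sr * (W * X * X) * u) / (Pm * u * (Qm * v))"
    using nz by (simp add: field_simps)
  also have "\<dots> = 0" unfolding num Sr by simp
  finally show ?thesis by simp
qed

lemma bailey_telescoping_algebra_top: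
  fixes W X S Sr Qm sg v :: complex
  assumes nz: "W \<noteq> 0" "X \<noteq> 0" "Qm \<noteq> 0" "v \<noteq> 0"
    and Sr: "Sr * (W * X) = S * (W * X) + 2 * sg" and hv: "v = 1 - X * X"
  shows "W * (1 + X) * (X * Sr - S) * (1 / (1 * (Qm * v)))
    = (1 + X) * (2 * sg * (1 / (1 * (Qm * v)))) + ((- S * W / (1 * Qm)) - 0)"
proof -
  have num: "W * (1 + X) * (X * Sr - S) - (1 + X) * (2 * sg) + S * W * v
      = (Sr * (W * X) - S * (W * X) - 2 * sg) * (1 + X)"
    unfolding hv by (simp add: algebra_simps)
  have "W * (1 + X) * (X * Sr - S) * (1 / (1 * (Qm * v))) - ((1 + X) * (2 * sg * (1 / (1 * (Qm * v)))) + ((- S * W / (1 * Qm)) - 0))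
    = (W * (1 + X) * (X * Sr - S) - (1 + X) * (2 * sg) + S * W * v) / (Qm * v)"
    using nz by (simp add: field_simps)
  also have "\<dots> = 0" unfolding num Sr by simp
  finally show ?thesis by simp
qed

lemma alt_qbinom_sum_double:
  shows "alt_qbinom_sum q (2 * n) = (-1) ^ n * (\<Sum>r\<le>n. (if r = 0 then 1 else 2) * (-1) ^ r * bailey_kernel q n r)"
proof -
  define w where "w = (\<lambda>a. (-1 :: complex) ^ a / (qpoch q q a * qpoch q q (2 * n - a)))"
  define t where "t = (\<lambda>r. (-1 :: complex) ^ r * bailey_kernel q n r)"
  have "alt_qbinom_sum q (2 * n) = sum w {0..2 * n}" by (simp add: alt_qbinom_sum_def w_def atLeast0AtMost)
  also have "{0..2 * n} = {0..<n} \<union> {n..2 * n}" by auto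
  also have "sum w ({0..<n} \<union> {n..2 * n}) = sum w {0..<n} + sum w {n..2 * n}"
    by (rule sum.union_disjoint) auto
  also have "sum w {n..2 * n} = sum (\<lambda>r. w (r + n)) {0..n}"
    using sum.shift_bounds_cl_nat_ivl[of w 0 n n] by (simp add: mult_2)
  also have "\<dots> = sum (\<lambda>r. (-1) ^ n * t r) {0..n}"
  proof (rule sum.cong)
    fix r assume "r \<in> {0..n}"
    then have "2 * n - (r + n) = n - r" "r + n = n + r" by auto
    then show "w (r + n) = (-1) ^ n * t r"
      by (simp add: w_def t_def bailey_kernel_def power_add mult_ac add.commute)
  qed simp
  also have "sum w {0..<n} = sum (\<lambda>r. w (n - r)) {1..n}"
    by (rule sum.reindex_bij_witness[where i="\<lambda>a. n - a" and j="\<lambda>r. n - r"]) auto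
  also have "\<dots> = sum (\<lambda>r. (-1) ^ n * t r) {1..n}"
  proof (rule sum.cong)
    fix r assume r: "r \<in> {1..n}"
    then have "2 * n - (n - r) = n + r" by auto
    then show "w (n - r) = (-1) ^ n * t r"
      using r by (simp add: w_def t_def bailey_kernel_def minus_one_power_diff mult_ac)
  qed simp
  also have "(\<Sum>r\<le>n. (if r = 0 then 1 else 2) * (-1) ^ r * bailey_kernel q n r) = sum t {0..n} + sum t {1..n}"
  proof -
    have "(\<Sum>r\<le>n. (if r = 0 then 1 else 2) * (-1) ^ r * bailey_kernel q n r) = (\<Sum>r\<in>{0..n}. t r + (if r = 0 then 0 else t r))"
      by (rule sum.cong) (auto simp: t_def atLeast0AtMost)
    also have "\<dots> = sum t {0..n} + (\<Sum>r\<in>{0..n}. (if r = 0 then 0 else t r))" by (rule sum.distrib)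
    also have "(\<Sum>r\<in>{0..n}. (if r = 0 then 0 else t r)) = sum t {1..n}"
      by (subst sum.atLeast_Suc_atMost) (auto intro!: sum.cong)
    finally show ?thesis .
  qed
  ultimately show ?thesis by (simp add: sum_distrib_right[symmetric] algebra_simps)
qed

lemma qpoch_q_mult_qpoch_minus_one:
  shows "qpoch q q n * qpoch (-1) q n * (1 + q ^ n) = 2 * (\<Prod>k<n. 1 - q ^ (2 * k + 2))"
proof (induction n)
  case 0 then show ?case by simp
next
  case (Suc n)
  have e: "(1 - q ^ Suc n) * (1 + q ^ Suc n) = 1 - q ^ (2 * n + 2)"
  proof -
    have ee: "Suc n + Suc n = 2 * n + 2" by simp
    have f: "q ^ Suc n * q ^ Suc n = q ^ (2 * n + 2)" by (metis ee power_add)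
    have a1: "(1 - q ^ Suc n) * (1 + q ^ Suc n) = 1 - q ^ Suc n * q ^ Suc n" by (simp add: algebra_simps)
    show ?thesis by (simp only: a1 f)
  qed
  have "qpoch q q (Suc n) * qpoch (-1) q (Suc n) * (1 + q ^ Suc n) =
     (qpoch q q n * qpoch (-1) q n * (1 + q ^ n)) * ((1 - q ^ Suc n) * (1 + q ^ Suc n))"
    by (simp add: qpoch_Suc mult_ac)
  also note e
  finally have "qpoch q q (Suc n) * qpoch (-1) q (Suc n) * (1 + q ^ Suc n) =
     (qpoch q q n * qpoch (-1) q n * (1 + q ^ n)) * (1 - q ^ (2 * n + 2))" .
  then show ?case using Suc by simp
qed

context qseries
begin

lemma alt_qbinom_sum_cancel_left:
  shows "(\<Sum>a\<le>Suc L. (-1) ^ a * (1 - q ^ a) / (qpoch q q a * qpoch q q (Suc L - a))) = - alt_qbinom_sum q L"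
proof -
  have "(\<Sum>a\<le>Suc L. (-1) ^ a * (1 - q ^ a) / (qpoch q q a * qpoch q q (Suc L - a)))
     = (\<Sum>b\<le>L. (-1) ^ Suc b * (1 - q ^ Suc b) / (qpoch q q (Suc b) * qpoch q q (Suc L - Suc b)))"
    by (subst sum.atMost_Suc_shift) simp
  also have "\<dots> = (\<Sum>b\<le>L. - ((-1) ^ b / (qpoch q q b * qpoch q q (L - b))))"
  proof (rule sum.cong)
    fix b assume "b \<in> {..L}"
    have "1 - q ^ Suc b \<noteq> 0" using q_mult_q_power_neq_1[of b] by simp
    then show "(-1) ^ Suc b * (1 - q ^ Suc b) / (qpoch q q (Suc b) * qpoch q q (Suc L - Suc b)) = - ((-1) ^ b / (qpoch q q b * qpoch q q (L - b)))"
      using qpoch_q_nonzero[of b] qpoch_q_nonzero[of "L - b"]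
      by (simp add: qpoch_q_Suc field_simps)
  qed simp
  also have "\<dots> = - alt_qbinom_sum q L" by (simp add: alt_qbinom_sum_def sum_negf)
  finally show ?thesis .
qed

lemma alt_qbinom_sum_cancel_right:
  shows "(\<Sum>a\<le>Suc L. (-1) ^ a * q ^ a * (1 - q ^ (Suc L - a)) / (qpoch q q a * qpoch q q (Suc L - a)))
      = (\<Sum>a\<le>L. (-1) ^ a * q ^ a / (qpoch q q a * qpoch q q (L - a)))"
proof -
  have "(\<Sum>a\<le>Suc L. (-1) ^ a * q ^ a * (1 - q ^ (Suc L - a)) / (qpoch q q a * qpoch q q (Suc L - a)))
     = (\<Sum>a\<le>L. (-1) ^ a * q ^ a * (1 - q ^ (Suc L - a)) / (qpoch q q a * qpoch q q (Suc L - a)))"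
    by (subst sum.atMost_Suc) simp
  also have "\<dots> = (\<Sum>a\<le>L. (-1) ^ a * q ^ a / (qpoch q q a * qpoch q q (L - a)))"
  proof (rule sum.cong)
    fix a assume "a \<in> {..L}"
    then have e: "Suc L - a = Suc (L - a)" by auto
    have "1 - q ^ Suc (L - a) \<noteq> 0" using q_mult_q_power_neq_1[of "L - a"] by simp
    then show "(-1) ^ a * q ^ a * (1 - q ^ (Suc L - a)) / (qpoch q q a * qpoch q q (Suc L - a)) = (-1) ^ a * q ^ a / (qpoch q q a * qpoch q q (L - a))"
      unfolding e using qpoch_q_nonzero[of a] qpoch_q_nonzero[of "L - a"]
      by (simp add: qpoch_q_Suc field_simps)
  qed simp
  finally show ?thesis .
qed

lemma alt_qbinom_sum_q_power:
  shows "(\<Sum>a\<le>Suc L. (-1) ^ a * q ^ a / (qpoch q q a * qpoch q q (Suc L - a))) = alt_qbinom_sum q (Suc L) + alt_qbinom_sum q L"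
proof -
  have "(\<Sum>a\<le>Suc L. (-1) ^ a * q ^ a / (qpoch q q a * qpoch q q (Suc L - a)))
    = (\<Sum>a\<le>Suc L. (-1) ^ a / (qpoch q q a * qpoch q q (Suc L - a)) - (-1) ^ a * (1 - q ^ a) / (qpoch q q a * qpoch q q (Suc L - a)))"
    by (rule sum.cong) (simp_all add: diff_divide_distrib[symmetric] algebra_simps)
  also have "\<dots> = alt_qbinom_sum q (Suc L) + alt_qbinom_sum q L"
    unfolding sum_subtractf alt_qbinom_sum_cancel_left by (simp add: alt_qbinom_sum_def)
  finally show ?thesis .
qed

lemma alt_qbinom_sum_recurrence:
  shows "(1 - q ^ Suc (Suc L)) * alt_qbinom_sum q (Suc (Suc L)) = alt_qbinom_sum q L"
proof -
  define M where "M = Suc (Suc L)"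
  have "(1 - q ^ M) * alt_qbinom_sum q M = (\<Sum>a\<le>M. (-1) ^ a * (1 - q ^ a) / (qpoch q q a * qpoch q q (M - a))
        + (-1) ^ a * q ^ a * (1 - q ^ (M - a)) / (qpoch q q a * qpoch q q (M - a)))"
    unfolding alt_qbinom_sum_def sum_distrib_left
  proof (rule sum.cong)
    fix a assume "a \<in> {..M}"
    then have qa: "q ^ a * q ^ (M - a) = q ^ M" by (simp add: power_add[symmetric])
    have "(-1) ^ a * (1 - q ^ a) + (-1) ^ a * q ^ a * (1 - q ^ (M - a)) = (-1) ^ a * (1 - q ^ a * q ^ (M - a))"
      by (simp add: algebra_simps)
    then have num: "(-1) ^ a * (1 - q ^ a) + (-1) ^ a * q ^ a * (1 - q ^ (M - a)) = (1 - q ^ M) * (-1) ^ a"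
      unfolding qa by simp
    show "(1 - q ^ M) * ((-1) ^ a / (qpoch q q a * qpoch q q (M - a))) =
      (-1) ^ a * (1 - q ^ a) / (qpoch q q a * qpoch q q (M - a)) + (-1) ^ a * q ^ a * (1 - q ^ (M - a)) / (qpoch q q a * qpoch q q (M - a))"
      unfolding add_divide_distrib[symmetric] num by simp
  qed simp
  also have "\<dots> = - alt_qbinom_sum q (Suc L) + (alt_qbinom_sum q (Suc L) + alt_qbinom_sum q L)"
    unfolding sum.distrib M_def alt_qbinom_sum_cancel_left alt_qbinom_sum_cancel_right alt_qbinom_sum_q_power ..
  finally show ?thesis by (simp add: M_def)
qed

lemma alt_qbinom_sum_even:
  shows "alt_qbinom_sum q (2 * n) * (\<Prod>k<n. 1 - q ^ (2 * k + 2)) = 1"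
proof (induction n)
  case 0 then show ?case by (simp add: alt_qbinom_sum_def)
next
  case (Suc n)
  have "2 * Suc n = Suc (Suc (2 * n))" by simp
  then have "alt_qbinom_sum q (2 * Suc n) * (1 - q ^ (2 * n + 2)) = alt_qbinom_sum q (2 * n)"
    using alt_qbinom_sum_recurrence[of "2 * n"] by (simp add: mult.commute)
  then have rec: "alt_qbinom_sum q (2 * Suc n) * (1 - q ^ (2 * n + 2)) = alt_qbinom_sum q (2 * n)" .
  define P where "P = (\<Prod>k<n. 1 - q ^ (2 * k + 2))"
  have "(\<Prod>k<Suc n. 1 - q ^ (2 * k + 2)) = P * (1 - q ^ (2 * n + 2))"
    unfolding P_def by (rule prod.lessThan_Suc)
  then have "alt_qbinom_sum q (2 * Suc n) * (\<Prod>k<Suc n. 1 - q ^ (2 * k + 2)) = (alt_qbinom_sum q (2 * Suc n) * (1 - q ^ (2 * n + 2))) * P"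
    by (simp only: mult_ac)
  also have "\<dots> = 1" unfolding rec P_def by (rule Suc.IH)
  finally show ?case .
qed

lemma bailey_telescoping_bottom:
  assumes n: "0 < n"
  shows "bailey_alpha q 0 * bailey_kernel q n 0 =
    (1 + q ^ n) * bailey_kernel q n 0 + (bailey_telescope q n 0 - bailey_telescope q n 1)"
proof -
  obtain m where m: "n = Suc m"
    using n by (cases n) auto
  define Pm where "Pm = qpoch q q m"
  define u where "u = 1 - q ^ n"
  have "Pm \<noteq> 0" "u \<noteq> 0"
    using qpoch_q_nonzero[of m] q_mult_q_power_neq_1[of m] by (auto simp: Pm_def u_def m)
  then have "2 * (1 / ((Pm * u) * (Pm * u))) - ((1 + q ^ n) * (1 / ((Pm * u) * (Pm * u))) +
      (0 - (- 1 / (Pm * (Pm * u))))) = (2 - (1 + q ^ n) - u) / (Pm * u * (Pm * u))"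
    by (simp add: field_simps)
  then have "2 * (1 / ((Pm * u) * (Pm * u))) =
      (1 + q ^ n) * (1 / ((Pm * u) * (Pm * u))) + (0 - (- 1 / (Pm * (Pm * u))))"
    by (simp add: u_def)
  moreover have "qpoch q q n = Pm * u"
    by (simp add: m Pm_def u_def qpoch_q_Suc)
  ultimately show ?thesis
    using n by (simp add: bailey_alpha_def bailey_kernel_def bailey_telescope_def S_sum_0 S_sum_minus_one
        m Pm_def u_def qpoch_q_Suc)
qed

lemma bailey_telescoping_top:
  assumes q0: "q \<noteq> 0" and n: "0 < n"
  shows "bailey_alpha q n * bailey_kernel q n n =
    (1 + q ^ n) * (2 * (-1) ^ n * bailey_kernel q n n) + (bailey_telescope q n n - bailey_telescope q n (Suc n))"
proof -
  define W where "W = q ^ (n * n - n)"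
  define X where "X = q ^ n"
  define S where "S = S_sum q (int n - 1)"
  define Sr where "Sr = S_sum q (int n)"
  define Qm where "Qm = qpoch q q (n + n - 1)"
  define v where "v = 1 - X * X"
  have WX: "W * X = q ^ (n * n)"
    unfolding W_def X_def power_add[symmetric] square_diff_add ..
  have "Sr * (W * X) = S * (W * X) + 2 * (-1) ^ n"
    unfolding WX Sr_def S_def by (rule S_sum_step[OF q0 n])
  moreover have "qpoch q q (n + n) = Qm * v" "v \<noteq> 0"
    using qpoch_q_pred[of "n + n" q] one_minus_q_power_nonzero[of "n + n"] n
    by (simp_all add: Qm_def v_def X_def power_add)
  ultimately have "W * (1 + X) * (X * Sr - S) * (1 / (1 * (Qm * v))) =
      (1 + X) * (2 * (-1) ^ n * (1 / (1 * (Qm * v)))) + ((- S * W / (1 * Qm)) - 0)"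
    using qpoch_q_nonzero q0
    by (intro bailey_telescoping_algebra_top) (auto simp: W_def X_def Qm_def v_def)
  moreover have "bailey_alpha q n = W * (1 + X) * (X * Sr - S)"
    by (simp add: bailey_alpha_def W_def X_def Sr_def S_def)
  ultimately show ?thesis
    using n \<open>qpoch q q (n + n) = Qm * v\<close>
    by (simp add: bailey_kernel_def bailey_telescope_def S_def W_def Qm_def X_def mult_ac)
qed

lemma bailey_telescoping_interior:
  assumes q0: "q \<noteq> 0" and r: "0 < r" "r < n"
  shows "bailey_alpha q r * bailey_kernel q n r =
    (1 + q ^ n) * (2 * (-1) ^ r * bailey_kernel q n r) + (bailey_telescope q n r - bailey_telescope q n (Suc r))"
proof -
  define W where "W = q ^ (r * r - r)"
  define X where "X = q ^ r"
  define Y where "Y = q ^ (n - r)"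
  define S where "S = S_sum q (int r - 1)"
  define Sr where "Sr = S_sum q (int r)"
  define Pm where "Pm = qpoch q q (n - r - 1)"
  define u where "u = 1 - Y"
  define Qm where "Qm = qpoch q q (n + r - 1)"
  define v where "v = 1 - Y * X * X"
  have WX: "W * X = q ^ (r * r)"
    unfolding W_def X_def power_add[symmetric] square_diff_add ..
  have qn: "q ^ n = Y * X" and qnr: "q ^ (n + r) = Y * X * X"
    using r unfolding Y_def X_def by (simp_all flip: power_add)
  have "Sr * (W * X) = S * (W * X) + 2 * (-1) ^ r"
    unfolding WX Sr_def S_def by (rule S_sum_step[OF q0 r(1)])
  moreover have pnr: "qpoch q q (n - r) = Pm * u" and pnr2: "qpoch q q (n + r) = Qm * v"
    using qpoch_q_pred[of "n - r" q] qpoch_q_pred[of "n + r" q] r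
    by (simp_all add: Pm_def u_def Y_def Qm_def v_def qnr)
  moreover have "u \<noteq> 0" "v \<noteq> 0"
    using one_minus_q_power_nonzero[of "n - r"] one_minus_q_power_nonzero[of "n + r"] r
    by (simp_all add: u_def Y_def v_def qnr)
  ultimately have "W * (1 + X) * (X * Sr - S) * (1 / (Pm * u * (Qm * v))) =
      (1 + Y * X) * (2 * (-1) ^ r * (1 / (Pm * u * (Qm * v)))) +
      ((- S * W / (Pm * u * Qm)) - (- Sr * (W * X * X) / (Pm * (Qm * v))))"
    using qpoch_q_nonzero q0
    by (intro bailey_telescoping_algebra_interior) (auto simp: W_def X_def Pm_def Qm_def u_def v_def)
  moreover have "bailey_alpha q r = W * (1 + X) * (X * Sr - S)"
    by (simp add: bailey_alpha_def W_def X_def Sr_def S_def)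
  moreover have "bailey_telescope q n (Suc r) = - Sr * (W * X * X) / (Pm * (Qm * v))"
  proof -
    have "q ^ (Suc r * Suc r - Suc r) = W * X * X"
      unfolding Suc_square_diff W_def X_def by (simp only: power_add)
    moreover have "n - Suc r = n - r - 1" "n + Suc r - 1 = n + r"
      by auto
    ultimately show ?thesis
      using r by (simp add: bailey_telescope_def Sr_def Pm_def pnr2 mult_ac)
  qed
  ultimately show ?thesis
    using r pnr pnr2 by (simp add: bailey_kernel_def bailey_telescope_def S_def W_def Qm_def qn mult_ac)
qed

lemma norm_bailey_alpha_le:
  assumes q0: "q \<noteq> 0"
  shows "norm (bailey_alpha q r) \<le> 8 * (real r + 1)"
proof -
  have q1: "norm q \<le> 1" using norm_q by simp
  have b1: "norm (q ^ (r * r) * S_sum q (int r)) \<le> 2 * real r + 1"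
    by (rule norm_power_mult_S_sum_le[OF q0 q1]) simp
  have b2: "norm (q ^ (r * r - r) * S_sum q (int r - 1)) \<le> 2 * real r + 1"
  proof (cases r)
    case 0 then show ?thesis by (simp add: S_sum_minus_one)
  next
    case (Suc m)
    have "int r - 1 = int m" by (simp add: Suc)
    moreover have "m * m \<le> r * r - r" by (simp add: Suc)
    ultimately have "norm (q ^ (r * r - r) * S_sum q (int r - 1)) \<le> 2 * real m + 1"
      using norm_power_mult_S_sum_le[OF q0 q1] by simp
    then show ?thesis by (simp add: Suc)
  qed
  have e: "bailey_alpha q r = (1 + q ^ r) * (q ^ (r * r) * S_sum q (int r) - q ^ (r * r - r) * S_sum q (int r - 1))"
  proof -
    have "q ^ (r * r) = q ^ (r * r - r) * q ^ r" by (simp add: power_add[symmetric] square_diff_add)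
    then show ?thesis by (simp add: bailey_alpha_def algebra_simps)
  qed
  have n1: "norm (1 + q ^ r) \<le> 2"
  proof -
    have "norm (1 + q ^ r) \<le> 1 + norm (q ^ r)" by (rule norm_triangle_le) simp
    also have "norm (q ^ r) \<le> 1" by (rule norm_q_power_le_1)
    finally show ?thesis by simp
  qed
  have "norm (bailey_alpha q r) \<le> 2 * ((2 * real r + 1) + (2 * real r + 1))"
    unfolding e norm_mult
    by (intro mult_mono n1 order.trans[OF norm_triangle_ineq4] add_mono b1 b2) auto
  then show ?thesis by simp
qed

theorem bailey_pair:
  assumes q0: "q \<noteq> 0"
  shows "(\<Sum>r\<le>n. bailey_alpha q r * bailey_kernel q n r) = 2 * (-1) ^ n / (qpoch q q n * qpoch (-1) q n)"
proof (cases "n = 0")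
  case True
  then show ?thesis
    by (simp add: bailey_alpha_def bailey_kernel_def S_sum_0 S_sum_minus_one)
next
  case False
  have "bailey_alpha q r * bailey_kernel q n r = (1 + q ^ n) * ((if r = 0 then 1 else 2) * (-1) ^ r *
      bailey_kernel q n r) + (bailey_telescope q n r - bailey_telescope q n (Suc r))" if "r \<le> n" for r
    using that False bailey_telescoping_bottom[of n] bailey_telescoping_top[OF q0, of n]
      bailey_telescoping_interior[OF q0, of r n]
    by (cases "r = 0"; cases "r = n") auto
  then have "(\<Sum>r\<le>n. bailey_alpha q r * bailey_kernel q n r) =
      (\<Sum>r\<le>n. (1 + q ^ n) * ((if r = 0 then 1 else 2) * (-1) ^ r * bailey_kernel q n r) +
        (bailey_telescope q n r - bailey_telescope q n (Suc r)))"
    by (intro sum.cong) auto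
  also have "\<dots> = (1 + q ^ n) * (\<Sum>r\<le>n. (if r = 0 then 1 else 2) * (-1) ^ r * bailey_kernel q n r) +
      (bailey_telescope q n 0 - bailey_telescope q n (Suc n))"
    by (simp add: sum.distrib sum_distrib_left sum_telescope)
  also have "bailey_telescope q n 0 - bailey_telescope q n (Suc n) = 0"
    by (simp add: bailey_telescope_def)
  also have "(\<Sum>r\<le>n. (if r = 0 then 1 else 2) * (-1) ^ r * bailey_kernel q n r) =
      (-1) ^ n * alt_qbinom_sum q (2 * n)"
    unfolding alt_qbinom_sum_double by (simp add: mult.assoc[symmetric] flip: power_add mult_2)
  finally have sum_eq: "(\<Sum>r\<le>n. bailey_alpha q r * bailey_kernel q n r) =
      (1 + q ^ n) * ((-1) ^ n * alt_qbinom_sum q (2 * n))"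
    by simp
  define P where "P = (\<Prod>k<n. 1 - q ^ (2 * k + 2))"
  have P: "alt_qbinom_sum q (2 * n) * P = 1"
    unfolding P_def by (rule alt_qbinom_sum_even)
  then have P_nonzero: "P \<noteq> 0" and alt_eq: "alt_qbinom_sum q (2 * n) = 1 / P"
    by (auto simp: eq_divide_eq)
  have nonzero: "1 + q ^ n \<noteq> 0"
    using minus_one_mult_q_power_neq_1[of n] by (auto simp: add_eq_0_iff)
  then have prod_eq: "qpoch q q n * qpoch (-1) q n = 2 * P / (1 + q ^ n)"
    using qpoch_q_mult_qpoch_minus_one[of q n] by (simp add: P_def eq_divide_eq)
  show ?thesis
    unfolding sum_eq alt_eq prod_eq using P_nonzero nonzero by (simp add: field_simps)
qed

end

section \<open>Bailey's lemma\<close>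

context qseries
begin

lemma bailey_kernel_tail_eq_phi21_term:
  "qpoch x q (r + k) * qpoch y q (r + k) * X ^ (r + k) * bailey_kernel q (r + k) r =
    qpoch x q r * qpoch y q r * X ^ r / qpoch q q (r + r) *
    phi21_term q (y * q ^ r) (x * q ^ r) (q * q ^ (r + r)) X k"
proof -
  have kernel: "bailey_kernel q (r + k) r = 1 / (qpoch q q k * qpoch q q (r + k + r))"
    by (simp add: bailey_kernel_def)
  have "qpoch q q (r + k + r) = qpoch q q (r + r) * qpoch (q * q ^ (r + r)) q k"
    by (metis add.commute add.left_commute qpoch_add)
  moreover have "qpoch (q * q ^ (r + r)) q k \<noteq> 0"
    using qpoch_nonzero[of k "q * q ^ (r + r)" q] q_mult_q_power_neq_1 by (simp add: mult.assoc flip: power_add)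
  ultimately show ?thesis
    unfolding kernel qpoch_add[of x q r k] qpoch_add[of y q r k] phi21_term_def
    using qpoch_q_nonzero[of k] qpoch_q_nonzero[of "r + r"] by (simp add: field_simps power_add)
qed

lemma bailey_kernel_series:
  assumes q0: "q \<noteq> 0" and a0: "a \<noteq> 0" and c0: "c \<noteq> 0" and qa: "norm q < norm a"
    and a1: "norm a < 1" and c1: "norm c < 1" and x: "norm (a * c / q) < 1"
  shows "(\<lambda>k. qpoch (q / a) q (r + k) * qpoch (q / c) q (r + k) * (a * c / q) ^ (r + k) *
      bailey_kernel q (r + k) r) sums
    (qpoch (q / a) q r * qpoch (q / c) q r / (qpoch a q r * qpoch c q r) * (a * c / q) ^ r *
      (qpoch_inf a q * qpoch_inf c q / (qpoch_inf q q * qpoch_inf (a * c / q) q)))"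
proof -
  define X where "X = a * c / q"
  define A where "A = q / c * q ^ r"
  define B where "B = q / a * q ^ r"
  define C where "C = q * q ^ (r + r)"
  have "norm (q / a * q ^ r) < 1"
    using qa a0 by (intro norm_mult_less_one[OF _ norm_q_power_le_1]) (simp add: norm_divide)
  then have B: "norm B < 1" "B \<noteq> 0"
    using q0 a0 by (simp_all add: B_def)
  have A: "A \<noteq> 0"
    using q0 c0 by (simp add: A_def)
  have CAB: "C / (A * B) = X" and CB: "C / B = a * q ^ r" and CA: "C / A = c * q ^ r"
    using q0 a0 c0 by (simp_all add: C_def A_def B_def X_def field_simps power_add)
  have C: "norm C < 1"
    unfolding C_def by (rule norm_mult_less_one[OF norm_q norm_q_power_le_1])
  have "norm (a * q ^ r) < 1"
    by (rule norm_mult_less_one[OF a1 norm_q_power_le_1])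
  then have "phi21_term q A B C X sums
      (qpoch_inf (c * q ^ r) q * qpoch_inf (a * q ^ r) q / (qpoch_inf C q * qpoch_inf X q))"
    using q_gauss[OF B A _ mult_q_power_neq_1[OF C]] x mult_q_power_neq_1
    unfolding CAB CB CA X_def by simp
  from sums_mult[OF this, of "qpoch (q / a) q r * qpoch (q / c) q r * X ^ r / qpoch q q (r + r)"]
  have "(\<lambda>k. qpoch (q / a) q (r + k) * qpoch (q / c) q (r + k) * X ^ (r + k) * bailey_kernel q (r + k) r) sums
      (qpoch (q / a) q r * qpoch (q / c) q r * X ^ r / qpoch q q (r + r) *
      (qpoch_inf (c * q ^ r) q * qpoch_inf (a * q ^ r) q / (qpoch_inf C q * qpoch_inf X q)))"
    unfolding bailey_kernel_tail_eq_phi21_term A_def B_def C_def .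
  moreover have "qpoch_inf (c * q ^ r) q = qpoch_inf c q / qpoch c q r"
    and "qpoch_inf (a * q ^ r) q = qpoch_inf a q / qpoch a q r"
    and "qpoch_inf C q = qpoch_inf q q / qpoch q q (r + r)"
    unfolding C_def using mult_q_power_neq_1[OF c1] mult_q_power_neq_1[OF a1] q_mult_q_power_neq_1
    by (auto intro: qpoch_inf_shift)
  moreover have "qpoch c q r \<noteq> 0" "qpoch a q r \<noteq> 0" "qpoch q q (r + r) \<noteq> 0"
      "qpoch_inf q q \<noteq> 0" "qpoch_inf X q \<noteq> 0"
    using qpoch_nonzero[of r c q] qpoch_nonzero[of r a q] qpoch_q_nonzero[of "r + r"]
      qpoch_inf_nonzero[OF q_mult_q_power_neq_1] qpoch_inf_nonzero[OF mult_q_power_neq_1[OF x[folded X_def]]]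
      mult_q_power_neq_1[OF c1] mult_q_power_neq_1[OF a1]
    by auto
  ultimately show ?thesis
    unfolding X_def by (simp add: field_simps)
qed

lemma bailey_double_series_bound:
  assumes alpha: "\<And>r. norm (\<alpha> r) \<le> K * (real r + 1)"
  shows "\<exists>L\<ge>0. \<forall>n r. norm (qpoch x q n * qpoch y q n * X ^ n * (\<alpha> r * bailey_kernel q n r)) \<le>
    L * norm X ^ n * (real r + 1)"
proof -
  obtain d where d: "d > 0" "\<And>k. d \<le> norm (qpoch q q k)"
    using qpoch_bounded_below[OF q_mult_q_power_neq_1] by blast
  define E where "E = exp (norm x / (1 - norm q)) * exp (norm y / (1 - norm q))"
  have K: "0 \<le> K"
    using order.trans[OF norm_ge_zero alpha[of 0]] by simp
  have "norm (bailey_kernel q n r) \<le> 1 / (d * d)" for n r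
  proof -
    have "norm (bailey_kernel q n r) = 1 / (norm (qpoch q q (n - r)) * norm (qpoch q q (n + r)))"
      by (simp add: bailey_kernel_def norm_divide norm_mult)
    also have "\<dots> \<le> 1 / (d * d)"
      using d qpoch_q_nonzero by (intro divide_left_mono mult_mono mult_pos_pos) auto
    finally show ?thesis .
  qed
  moreover have "norm (qpoch x q n * qpoch y q n) \<le> E" for n
    unfolding E_def norm_mult by (intro mult_mono norm_qpoch_le) auto
  ultimately have "norm (qpoch x q n * qpoch y q n) * norm X ^ n * (norm (\<alpha> r) * norm (bailey_kernel q n r)) \<le>
      E * norm X ^ n * (K * (real r + 1) * (1 / (d * d)))" for n r
    using alpha order.trans[OF norm_ge_zero alpha] by (intro mult_mono) (auto simp: E_def)
  then have "norm (qpoch x q n * qpoch y q n * X ^ n * (\<alpha> r * bailey_kernel q n r)) \<le>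
      E * K / (d * d) * norm X ^ n * (real r + 1)" for n r
    by (simp add: norm_mult norm_power field_simps)
  moreover have "0 \<le> E * K / (d * d)"
    using K d by (simp add: E_def)
  ultimately show ?thesis
    by blast
qed

theorem bailey_lemma:
  assumes q0: "q \<noteq> 0" and a0: "a \<noteq> 0" and c0: "c \<noteq> 0" and qa: "norm q < norm a"
    and a1: "norm a < 1" and c1: "norm c < 1" and x: "norm (a * c / q) < 1"
    and alpha: "\<And>r. norm (\<alpha> r) \<le> K\<^sub>\<alpha> * (real r + 1)"
  shows "(\<lambda>r. qpoch (q / a) q r * qpoch (q / c) q r / (qpoch a q r * qpoch c q r) * (a * c / q) ^ r * \<alpha> r)
    sums (qpoch_inf q q * qpoch_inf (a * c / q) q / (qpoch_inf a q * qpoch_inf c q) *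
      (\<Sum>n. qpoch (q / a) q n * qpoch (q / c) q n * (a * c / q) ^ n * (\<Sum>r\<le>n. \<alpha> r * bailey_kernel q n r)))"
proof -
  define X where "X = a * c / q"
  define \<rho> where "\<rho> n = qpoch (q / a) q n * qpoch (q / c) q n" for n
  define g where "g n r = (if r \<le> n then \<rho> n * X ^ n * (\<alpha> r * bailey_kernel q n r) else 0)" for n r
  define T where "T r = qpoch (q / a) q r * qpoch (q / c) q r / (qpoch a q r * qpoch c q r) * X ^ r * \<alpha> r" for r
  define P where "P = qpoch_inf a q * qpoch_inf c q / (qpoch_inf q q * qpoch_inf X q)"
  have rows: "(\<Sum>r. g n r) = \<rho> n * X ^ n * (\<Sum>r\<le>n. \<alpha> r * bailey_kernel q n r)" for n
  proof -
    have "(\<Sum>r. g n r) = (\<Sum>r\<le>n. g n r)"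
      by (rule suminf_finite) (auto simp: g_def)
    then show ?thesis
      by (simp add: g_def sum_distrib_left)
  qed
  have cols: "(\<Sum>n. g n r) = T r * P" for r
  proof -
    have "(\<lambda>k. g (k + r) r) = (\<lambda>k. \<alpha> r * (qpoch (q / a) q (r + k) * qpoch (q / c) q (r + k) *
        (a * c / q) ^ (r + k) * bailey_kernel q (r + k) r))"
      by (simp add: fun_eq_iff g_def \<rho>_def X_def add.commute mult_ac)
    then have "(\<lambda>k. g (k + r) r) sums (T r * P)"
      using sums_mult[OF bailey_kernel_series[OF q0 a0 c0 qa a1 c1 x, of r], of "\<alpha> r"]
      by (simp add: T_def P_def X_def mult_ac)
    then show ?thesis
      by (subst (asm) sums_zero_iff_shift) (auto simp: g_def sums_iff)
  qed
  obtain L where "L \<ge> 0" and L: "\<And>n r. norm (\<rho> n * X ^ n * (\<alpha> r * bailey_kernel q n r)) \<le>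
      L * norm X ^ n * (real r + 1)"
    unfolding \<rho>_def using bailey_double_series_bound[OF alpha] by blast
  then have "norm (g n r) \<le> L * norm X ^ n * (real r + 1)" for n r
    by (simp add: g_def)
  from suminf_swap_triangular[OF this _ norm_ge_zero] x
  have swap: "(\<Sum>n. \<Sum>r. g n r) = (\<Sum>r. \<Sum>n. g n r)" "summable (\<lambda>r. \<Sum>n. g n r)"
    by (auto simp: g_def X_def)
  have "P \<noteq> 0"
    using mult_q_power_neq_1[OF a1] mult_q_power_neq_1[OF c1] q_mult_q_power_neq_1
      mult_q_power_neq_1[OF x[folded X_def]]
    by (auto simp: P_def intro!: qpoch_inf_nonzero)
  moreover have "summable (\<lambda>r. T r * P * inverse P)"
    using swap(2) unfolding cols by (rule summable_mult2)
  ultimately have "summable T"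
    by (simp add: mult.assoc)
  then have "T sums (1 / P * (\<Sum>r. T r * P))"
    using \<open>P \<noteq> 0\<close> by (simp add: suminf_mult2[symmetric] summable_sums)
  also have "(\<Sum>r. T r * P) = (\<Sum>n. \<rho> n * X ^ n * (\<Sum>r\<le>n. \<alpha> r * bailey_kernel q n r))"
    using swap(1) unfolding rows cols ..
  finally show ?thesis
    by (simp add: T_def P_def \<rho>_def X_def)
qed

end

lemma theorem7p1_summand_eq:
  assumes q0: "q \<noteq> 0"
  shows "(1 + q ^ m) * q powi (int m ^ 2 - 2 * int m)
      * (qpoch (q / a) q m * qpoch (q / c) q m * (a * c) ^ m) / (qpoch a q m * qpoch c q m)
      * (q ^ m * S_sum q (int m) - S_sum q (int m - 1))
    = qpoch (q / a) q m * qpoch (q / c) q m / (qpoch a q m * qpoch c q m) * (a * c / q) ^ m * bailey_alpha q m"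
proof -
  have "int m ^ 2 - 2 * int m = int (m * m - m) - int m"
    using le_square[of m] by (simp add: power2_eq_square of_nat_diff)
  then have "q powi (int m ^ 2 - 2 * int m) = q powi (int (m * m - m) - int m)"
    by simp
  also have "\<dots> = q powi (int (m * m - m)) / q powi (int m)"
    by (rule power_int_diff) (use q0 in auto)
  finally have powi_eq: "q powi (int m ^ 2 - 2 * int m) = q ^ (m * m - m) / q ^ m"
    by (simp only: power_int_of_nat)
  show ?thesis
    unfolding powi_eq bailey_alpha_def using q0 by (simp add: power_divide field_simps)
qed

lemma theorem7p1_series_eq_bailey_series:
  assumes q0: "q \<noteq> 0"
    and summable: "summable (\<lambda>m. qpoch (q / a) q m * qpoch (q / c) q m / (qpoch a q m * qpoch c q m) *
      (a * c / q) ^ m * bailey_alpha q m)"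
  shows "2 + (\<Sum>n. let m = Suc n in
           (1 + q ^ m) * q powi (int m ^ 2 - 2 * int m)
           * (qpoch (q / a) q m * qpoch (q / c) q m * (a * c) ^ m)
             / (qpoch a q m * qpoch c q m)
           * (q ^ m * S_sum q (int m) - S_sum q (int m - 1)))
    = (\<Sum>m. qpoch (q / a) q m * qpoch (q / c) q m / (qpoch a q m * qpoch c q m) * (a * c / q) ^ m * bailey_alpha q m)"
    (is "2 + (\<Sum>n. ?S n) = (\<Sum>m. ?T m)")
proof -
  have "(\<lambda>n. ?S n) = (\<lambda>n. ?T (Suc n))"
    by (simp only: Let_def theorem7p1_summand_eq[OF q0])
  moreover have "?T 0 = 2"
    by (simp add: bailey_alpha_def S_sum_0 S_sum_minus_one)
  ultimately show ?thesis
    using suminf_split_head[OF summable] by simp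
qed

context qseries
begin

lemma qpoch_inf_minus_one: "qpoch_inf (- 1) q = 2 * qpoch_inf (- q) q"
  using qpoch_inf_split[of "- 1" 1] by (simp add: qpoch_def)

lemma theorem7p1_heine_step:
  assumes q0: "q \<noteq> 0" and c0: "c \<noteq> 0" and a1: "norm a < 1" and cq: "norm (c / q) < 1"
  shows "(\<Sum>n. qpoch (q / c) q n / qpoch (-a) q n * (- c / q) ^ n) =
    qpoch_inf q q * qpoch_inf (- 1) q / (qpoch_inf (- a) q * qpoch_inf (- c / q) q) *
    suminf (phi21_term q (- a / q) (- c / q) (- 1) q)"
proof -
  have "norm (- a) < 1" "norm (- c / q) < 1"
    using a1 cq by (simp_all add: norm_divide)
  then have "phi21_term q (q / c) q (- a) (- c / q) sums (qpoch_inf q q * qpoch_inf (- 1) q /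
      (qpoch_inf (- a) q * qpoch_inf (- c / q) q) * suminf (phi21_term q (- a / q) (- c / q) (- 1) q))"
    using heine_transformation[OF norm_q q0 _ mult_q_power_neq_1, of "- c / q" "- a" "q / c"]
      minus_one_mult_q_power_neq_1 q0 c0
    by simp
  moreover have "phi21_term q (q / c) q (- a) (- c / q) = (\<lambda>n. qpoch (q / c) q n / qpoch (-a) q n * (- c / q) ^ n)"
    using qpoch_q_nonzero by (simp add: fun_eq_iff phi21_term_def)
  ultimately show ?thesis
    by (simp add: sums_iff)
qed

lemma theorem7p1_euler_step:
  assumes q0: "q \<noteq> 0" and a0: "a \<noteq> 0" and c0: "c \<noteq> 0" and qa: "norm q < norm a"
    and a1: "norm a < 1" and x: "norm (a * c / q) < 1"
  shows "suminf (phi21_term q (q / c) (q / a) (- 1) (- a * c / q)) =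
    qpoch_inf q q / qpoch_inf (- a * c / q) q * suminf (phi21_term q (- a / q) (- c / q) (- 1) q)"
proof -
  have "suminf (phi21_term q (q / c) (q / a) (- 1) (- a * c / q)) =
      qpoch_inf (- (q / c * (q / a) * (- a * c / q))) q / qpoch_inf (- a * c / q) q *
      suminf (phi21_term q (- 1 / (q / c)) (- 1 / (q / a)) (- 1) (- (q / c * (q / a) * (- a * c / q))))"
  proof (rule q_euler_transformation_minus_one)
    show "norm (q / c * (q / a) * (- a * c / q)) < norm (q / a)"
      using a1 a0 c0 q0 by (simp add: norm_divide norm_mult field_simps)
    show "norm (q / a) < 1"
      using qa a0 by (simp add: norm_divide)
    show "q / c * (- a * c / q) * q ^ k \<noteq> 1" for k
      using mult_q_power_neq_1[of "- a" k] a1 q0 c0 by simp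
  qed (use q0 a0 c0 x in \<open>auto simp: norm_divide norm_mult\<close>)
  moreover have "q / c * (q / a) * (- a * c / q) = - q" "- 1 / (q / c) = - c / q" "- 1 / (q / a) = - a / q"
    using q0 a0 c0 by (simp_all add: field_simps)
  ultimately show ?thesis
    by (simp add: phi21_term_commute[of q "- (c / q)"])
qed

lemma theorem7p1_bailey_step:
  assumes q0: "q \<noteq> 0" and a0: "a \<noteq> 0" and c0: "c \<noteq> 0" and qa: "norm q < norm a"
    and a1: "norm a < 1" and cq: "norm (c / q) < 1" and x: "norm (a * c / q) < 1"
  shows "(\<lambda>m. qpoch (q / a) q m * qpoch (q / c) q m / (qpoch a q m * qpoch c q m) * (a * c / q) ^ m *
      bailey_alpha q m) sums (qpoch_inf q q * qpoch_inf (a * c / q) q / (qpoch_inf a q * qpoch_inf c q) *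
      (2 * suminf (phi21_term q (q / c) (q / a) (- 1) (- a * c / q))))"
proof -
  have c1: "norm c < 1"
    using cq q0 norm_q by (simp add: norm_divide divide_less_eq)
  have "norm (- a * c / q) < 1"
    using x by (simp add: norm_divide norm_mult)
  have "(\<lambda>n. qpoch (q / a) q n * qpoch (q / c) q n * (a * c / q) ^ n *
      (\<Sum>r\<le>n. bailey_alpha q r * bailey_kernel q n r)) = (\<lambda>n. 2 * phi21_term q (q / c) (q / a) (- 1) (- a * c / q) n)"
    using q0 by (simp add: fun_eq_iff bailey_pair phi21_term_def power_minus[of "a * c / q"] field_simps)
  then have "(\<Sum>n. qpoch (q / a) q n * qpoch (q / c) q n * (a * c / q) ^ n *
      (\<Sum>r\<le>n. bailey_alpha q r * bailey_kernel q n r)) = 2 * suminf (phi21_term q (q / c) (q / a) (- 1) (- a * c / q))"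
    using suminf_mult[OF summable_phi21_term[OF \<open>norm (- a * c / q) < 1\<close> minus_one_mult_q_power_neq_1]]
    by simp
  with bailey_lemma[OF q0 a0 c0 qa a1 c1 x norm_bailey_alpha_le[OF q0]] show ?thesis
    by simp
qed

lemma theorem7p1_annulus:
  assumes q0: "q \<noteq> 0" and a0: "a \<noteq> 0" and c0: "c \<noteq> 0" and qa: "norm q < norm a"
    and a1: "norm a < 1" and cq: "norm (c / q) < 1" and x: "norm (a * c / q) < 1"
  shows "(\<Sum>n. qpoch (q / c) q n / qpoch (-a) q n * (- c / q) ^ n)
    = (qpoch_inf (-q) q * qpoch_inf a q * qpoch_inf c q * qpoch_inf (- a * c / q) q)
      / (qpoch_inf q q * qpoch_inf (-a) q * qpoch_inf (- c / q) q * qpoch_inf (a * c / q) q)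
      * (2 + (\<Sum>n. let m = Suc n in
           (1 + q ^ m) * q powi (int m ^ 2 - 2 * int m)
           * (qpoch (q / a) q m * qpoch (q / c) q m * (a * c) ^ m)
             / (qpoch a q m * qpoch c q m)
           * (q ^ m * S_sum q (int m) - S_sum q (int m - 1))))"
proof -
  note bailey = theorem7p1_bailey_step[OF assms]
  have "norm c < 1"
    using cq q0 norm_q by (simp add: norm_divide divide_less_eq)
  then have "qpoch_inf a q \<noteq> 0" "qpoch_inf c q \<noteq> 0" "qpoch_inf (a * c / q) q \<noteq> 0" "qpoch_inf q q \<noteq> 0"
    "qpoch_inf (- a) q \<noteq> 0" "qpoch_inf (- c / q) q \<noteq> 0" "qpoch_inf (- a * c / q) q \<noteq> 0"
    using a1 x cq norm_q by (simp_all add: qpoch_inf_nonzero_norm_less_1 norm_divide norm_mult)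
  then show ?thesis
    unfolding theorem7p1_series_eq_bailey_series[OF q0 sums_summable[OF bailey]] sums_unique[OF bailey, symmetric]
      theorem7p1_heine_step[OF q0 c0 a1 cq] theorem7p1_euler_step[OF q0 a0 c0 qa a1 x] qpoch_inf_minus_one
    by (simp add: field_simps)
qed

lemma holomorphic_on_qpoch_inf_mult_series:
  assumes z: "norm z < 1"
  shows "(\<lambda>a. qpoch_inf (- a) q * (\<Sum>n. qpoch B q n / qpoch (- a) q n * z ^ n)) holomorphic_on ball 0 1"
proof -
  obtain K where "\<And>n. norm (qpoch B q n) \<le> K"
    using norm_qpoch_le by blast
  then have "(\<lambda>C. \<Sum>n. qpoch B q n * z ^ n * qpoch_inf (C * q ^ n) q) \<circ> uminus holomorphic_on ball 0 1"
    by (intro holomorphic_on_compose holomorphic_intros holomorphic_on_qpoch_inf_series[OF z])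
  then have "(\<lambda>a. \<Sum>n. qpoch B q n * z ^ n * qpoch_inf (- a * q ^ n) q) holomorphic_on ball 0 1"
    unfolding comp_def .
  moreover have "(\<Sum>n. qpoch B q n * z ^ n * qpoch_inf (- a * q ^ n) q) =
      qpoch_inf (- a) q * (\<Sum>n. qpoch B q n / qpoch (- a) q n * z ^ n)" if "a \<in> ball 0 1" for a
  proof -
    have "phi21_term q B q (- a) z = (\<lambda>n. qpoch B q n / qpoch (- a) q n * z ^ n)"
      using qpoch_q_nonzero by (simp add: fun_eq_iff phi21_term_def)
    then show ?thesis
      using qpoch_inf_times_phi21_series[OF z mult_q_power_neq_1, of "- a" B q] that qpoch_q_nonzero by simp
  qed
  ultimately show ?thesis
    by (rule holomorphic_transform)
qed

lemma power_series_qpoch_local_bound: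
  assumes w: "norm w < 1" and V: "\<And>m. norm (V m) \<le> K * (real m + 1)"
    and a0: "a0 \<in> ball 0 1 - {0}"
  shows "\<exists>d>0. cball a0 d \<subseteq> ball 0 1 - {0} \<and> (\<exists>M. summable M \<and>
    (\<forall>n. \<forall>y\<in>cball a0 d. norm (qpoch (q / y) q n * y ^ n * qpoch_inf (y * q ^ n) q * (w ^ n * V n)) \<le> M n))"
proof -
  define d where "d = min (norm a0 / 2) ((1 - norm a0) / 2)"
  define r where "r = norm a0 / 2"
  define R where "R = norm a0 + d"
  have a0': "0 < norm a0" "norm a0 < 1"
    using a0 by auto
  then have d: "d > 0" "d \<le> norm a0 / 2" "d \<le> (1 - norm a0) / 2"
    by (auto simp: d_def min_def)
  have bounds: "r \<le> norm y \<and> norm y \<le> R" if "y \<in> cball a0 d" for y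
    using that norm_triangle_ineq2[of a0 y] norm_triangle_ineq[of a0 "y - a0"] d
    by (auto simp: dist_norm norm_minus_commute r_def R_def)
  have r: "r > 0" and R: "R < 1" "0 \<le> R"
    using a0' d by (auto simp: r_def R_def)
  then have sub: "cball a0 d \<subseteq> ball 0 1 - {0}"
    using bounds by fastforce
  define \<rho> where "\<rho> = R * norm w"
  have \<rho>: "0 \<le> \<rho>" "\<rho> < 1"
    using R w mult_strict_mono[of R 1 "norm w" 1] by (auto simp: \<rho>_def)
  define E where "E = exp (norm q / r / (1 - norm q)) * exp (R / (1 - norm q)) * K"
  have "norm (qpoch (q / y) q n * y ^ n * qpoch_inf (y * q ^ n) q * (w ^ n * V n)) \<le> E * ((real n + 1) * \<rho> ^ n)"
    if y: "y \<in> cball a0 d" for n y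
  proof -
    have ry: "r \<le> norm y" "norm y \<le> R"
      using bounds[OF y] by auto
    have "norm (q / y) \<le> norm q / r"
      unfolding norm_divide using ry r by (intro divide_left_mono mult_pos_pos) auto
    then have "norm (qpoch (q / y) q n) * norm (qpoch_inf (y * q ^ n) q) * (norm y * norm w) ^ n * norm (V n)
        \<le> exp (norm q / r / (1 - norm q)) * exp (R / (1 - norm q)) * \<rho> ^ n * (K * (real n + 1))"
      unfolding \<rho>_def using ry R V order.trans[OF norm_ge_zero V]
      by (intro mult_mono norm_qpoch_le norm_qpoch_inf_le norm_mult_q_power_le power_mono mult_right_mono) auto
    then show ?thesis
      by (simp add: E_def norm_mult norm_power power_mult_distrib mult_ac)
  qed
  moreover have "summable (\<lambda>n. E * ((real n + 1) * \<rho> ^ n))"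
    using summable_linear_mult_geometric[OF \<rho>] by (rule summable_mult)
  ultimately show ?thesis
    using d(1) sub by blast
qed

lemma holomorphic_on_power_series_qpoch:
  assumes w: "norm w < 1" and V: "\<And>m. norm (V m) \<le> K * (real m + 1)"
  shows "(\<lambda>a. \<Sum>n. qpoch (q / a) q n * a ^ n * qpoch_inf (a * q ^ n) q * (w ^ n * V n))
    holomorphic_on ball 0 1 - {0}"
  by (rule holomorphic_on_suminf[OF _ _ power_series_qpoch_local_bound[OF w V]])
     (auto intro!: holomorphic_intros)

lemma summable_power_series_qpoch:
  assumes w: "norm w < 1" and V: "\<And>m. norm (V m) \<le> K * (real m + 1)" and a: "a \<in> ball 0 1 - {0}"
  shows "summable (\<lambda>n. qpoch (q / a) q n * a ^ n * qpoch_inf (a * q ^ n) q * (w ^ n * V n))"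
proof -
  obtain d M where "d > 0" "summable M"
    and "\<And>n y. y \<in> cball a d \<Longrightarrow> norm (qpoch (q / y) q n * y ^ n * qpoch_inf (y * q ^ n) q * (w ^ n * V n)) \<le> M n"
    using power_series_qpoch_local_bound[OF w V a] by blast
  then show ?thesis
    by (intro summable_comparison_test[OF _ \<open>summable M\<close>]) auto
qed

lemma power_series_qpoch_term_eq:
  assumes q0: "q \<noteq> 0" and a1: "norm a < 1"
  shows "qpoch (q / a) q n * a ^ n * qpoch_inf (a * q ^ n) q *
      ((c / q) ^ n * (qpoch (q / c) q n / qpoch c q n * bailey_alpha q n)) =
    qpoch_inf a q * (qpoch (q / a) q n * qpoch (q / c) q n / (qpoch a q n * qpoch c q n) *
      (a * c / q) ^ n * bailey_alpha q n)"
proof -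
  have shift: "qpoch_inf (a * q ^ n) q = qpoch_inf a q / qpoch a q n"
    by (rule qpoch_inf_shift) (use mult_q_power_neq_1[OF a1] in auto)
  have "qpoch a q n \<noteq> 0"
    by (rule qpoch_nonzero) (use mult_q_power_neq_1[OF a1] in auto)
  then show ?thesis
    unfolding shift using q0 by (simp add: power_mult_distrib power_divide field_simps)
qed

lemma holomorphic_on_qpoch_inf_mult_theorem7p1_series:
  assumes q0: "q \<noteq> 0" and cq: "norm (c / q) < 1"
  shows "(\<lambda>a. qpoch_inf a q * (2 + (\<Sum>n. let m = Suc n in
           (1 + q ^ m) * q powi (int m ^ 2 - 2 * int m)
           * (qpoch (q / a) q m * qpoch (q / c) q m * (a * c) ^ m)
             / (qpoch a q m * qpoch c q m)
           * (q ^ m * S_sum q (int m) - S_sum q (int m - 1)))))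
    holomorphic_on ball 0 1 - {0}"
proof -
  have c1: "norm c < 1"
    using cq q0 norm_q by (simp add: norm_divide divide_less_eq)
  define V where "V m = qpoch (q / c) q m / qpoch c q m * bailey_alpha q m" for m
  obtain K where K: "\<And>m. norm (qpoch (q / c) q m / qpoch c q m) \<le> K"
    using qpoch_ratio_bounded[OF mult_q_power_neq_1[OF c1]] by blast
  have V: "norm (V m) \<le> 8 * K * (real m + 1)" for m
    unfolding V_def norm_mult using mult_mono[OF K norm_bailey_alpha_le[OF q0]] order.trans[OF norm_ge_zero K]
    by (simp add: mult_ac)
  have eq: "qpoch_inf a q * (2 + (\<Sum>n. let m = Suc n in
           (1 + q ^ m) * q powi (int m ^ 2 - 2 * int m)
           * (qpoch (q / a) q m * qpoch (q / c) q m * (a * c) ^ m)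
             / (qpoch a q m * qpoch c q m)
           * (q ^ m * S_sum q (int m) - S_sum q (int m - 1))))
    = (\<Sum>n. qpoch (q / a) q n * a ^ n * qpoch_inf (a * q ^ n) q * ((c / q) ^ n * V n))"
    if a: "a \<in> ball 0 1 - {0}" for a
  proof -
    have a1: "norm a < 1"
      using a by simp
    have termwise: "qpoch (q / a) q n * a ^ n * qpoch_inf (a * q ^ n) q * ((c / q) ^ n * V n) =
        qpoch_inf a q * (qpoch (q / a) q n * qpoch (q / c) q n / (qpoch a q n * qpoch c q n) *
          (a * c / q) ^ n * bailey_alpha q n)" for n
      unfolding V_def by (rule power_series_qpoch_term_eq[OF q0 a1])
    have "qpoch_inf a q \<noteq> 0"
      using a1 by (rule qpoch_inf_nonzero_norm_less_1)
    moreover have "summable (\<lambda>n. qpoch_inf a q * (qpoch (q / a) q n * qpoch (q / c) q n /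
        (qpoch a q n * qpoch c q n) * (a * c / q) ^ n * bailey_alpha q n))"
      using summable_power_series_qpoch[OF cq V a] unfolding termwise .
    ultimately have summable: "summable (\<lambda>n. qpoch (q / a) q n * qpoch (q / c) q n /
        (qpoch a q n * qpoch c q n) * (a * c / q) ^ n * bailey_alpha q n)"
      by (rule summable_mult_D[rotated])
    show ?thesis
      unfolding termwise theorem7p1_series_eq_bailey_series[OF q0 summable]
      by (rule suminf_mult[OF summable, symmetric])
  qed
  show ?thesis
    by (rule holomorphic_transform[OF holomorphic_on_power_series_qpoch[OF cq V]]) (rule eq[symmetric])
qed

lemma theorem7p1_lhs_holomorphic:
  assumes cq: "norm (c / q) < 1"
  shows "(\<lambda>a. qpoch_inf q q * qpoch_inf (-a) q * qpoch_inf (- c / q) q * qpoch_inf (a * c / q) q *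
      (\<Sum>n. qpoch (q / c) q n / qpoch (-a) q n * (- c / q) ^ n)) holomorphic_on ball 0 1 - {0}"
proof -
  have "(\<lambda>a. qpoch_inf q q * qpoch_inf (- c / q) q * qpoch_inf (a * c / q) q *
      (qpoch_inf (- a) q * (\<Sum>n. qpoch (q / c) q n / qpoch (-a) q n * (- c / q) ^ n)))
      holomorphic_on ball 0 1 - {0}"
    using cq by (intro holomorphic_intros holomorphic_on_subset[OF holomorphic_on_qpoch_inf_mult_series])
      (auto simp: norm_divide)
  then show ?thesis
    by (simp add: mult_ac)
qed

lemma theorem7p1_rhs_holomorphic:
  assumes q0: "q \<noteq> 0" and cq: "norm (c / q) < 1"
  shows "(\<lambda>a. qpoch_inf (-q) q * qpoch_inf a q * qpoch_inf c q * qpoch_inf (- a * c / q) q *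
      (2 + (\<Sum>n. let m = Suc n in
           (1 + q ^ m) * q powi (int m ^ 2 - 2 * int m)
           * (qpoch (q / a) q m * qpoch (q / c) q m * (a * c) ^ m)
             / (qpoch a q m * qpoch c q m)
           * (q ^ m * S_sum q (int m) - S_sum q (int m - 1))))) holomorphic_on ball 0 1 - {0}"
proof -
  have "(\<lambda>a. qpoch_inf (- q) q * qpoch_inf c q * qpoch_inf (- a * c / q) q * (qpoch_inf a q *
      (2 + (\<Sum>n. let m = Suc n in
           (1 + q ^ m) * q powi (int m ^ 2 - 2 * int m)
           * (qpoch (q / a) q m * qpoch (q / c) q m * (a * c) ^ m)
             / (qpoch a q m * qpoch c q m)
           * (q ^ m * S_sum q (int m) - S_sum q (int m - 1)))))) holomorphic_on ball 0 1 - {0}"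
    using q0 by (intro holomorphic_on_mult[OF _ holomorphic_on_qpoch_inf_mult_theorem7p1_series[OF q0 cq]]
      holomorphic_intros) auto
  then show ?thesis
    by (simp add: mult_ac)
qed

end

theorem theorem7p1:
  fixes q a c :: complex
  assumes "0 < norm q" "norm q < 1"
    and "a \<noteq> 0" "c \<noteq> 0" "norm a < 1" "norm (c / q) < 1" "norm (a * c / q) < 1"
  shows "(\<Sum>n. qpoch (q / c) q n / qpoch (-a) q n * (- c / q) ^ n)
    = (qpoch_inf (-q) q * qpoch_inf a q * qpoch_inf c q * qpoch_inf (- a * c / q) q)
      / (qpoch_inf q q * qpoch_inf (-a) q * qpoch_inf (- c / q) q * qpoch_inf (a * c / q) q)
      * (2 + (\<Sum>n. let m = Suc n in
           (1 + q ^ m) * q powi (int m ^ 2 - 2 * int m)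
           * (qpoch (q / a) q m * qpoch (q / c) q m * (a * c) ^ m)
             / (qpoch a q m * qpoch c q m)
           * (q ^ m * S_sum q (int m) - S_sum q (int m - 1))))"
    (is "?L a = ?N a / ?D a * (2 + ?R a)")
proof -
  have q0: "q \<noteq> 0" and cq: "norm (c / q) < 1" and c0: "c \<noteq> 0"
    using assms by auto
  interpret qseries q
    using assms(2) by unfold_locales
  have small: "norm (b * c / q) < 1" if "norm b < 1" for b
    using that cq norm_mult_less_one[of b "c / q"] by (simp add: mult.commute)
  have D: "?D b \<noteq> 0" if "norm b < 1" for b
    using that small[OF that] cq assms(2) by (simp add: qpoch_inf_nonzero_norm_less_1 norm_divide)
  have "?D a * ?L a = ?N a * (2 + ?R a)"
  proof (rule analytic_continuation_from_annulus[where f = "\<lambda>b. ?D b * ?L b" and g = "\<lambda>b. ?N b * (2 + ?R b)"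
        and S = "ball 0 1 - {0}" and r = "norm q" and s = 1])
    show "(\<lambda>b. ?D b * ?L b) holomorphic_on ball 0 1 - {0}"
      by (rule theorem7p1_lhs_holomorphic[OF cq])
    show "(\<lambda>b. ?N b * (2 + ?R b)) holomorphic_on ball 0 1 - {0}"
      by (rule theorem7p1_rhs_holomorphic[OF q0 cq])
    fix b :: complex
    assume b: "norm q < norm b" "norm b < 1"
    then have "?L b = ?N b / ?D b * (2 + ?R b)"
      using assms(1) by (intro theorem7p1_annulus[OF q0 _ c0 _ _ cq small]) auto
    then show "?D b * ?L b = ?N b * (2 + ?R b)"
      using eq_divide_mult_iff[OF D[OF b(2)]] by blast
  qed (use assms in \<open>auto simp: connected_punctured_ball\<close>)
  then show ?thesis
    using eq_divide_mult_iff[OF D[OF assms(5)]] by blast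
qed

end
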